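(* Let $X$ be an eventually dendric shift over $\mathcal{A}$ and $\sigma:\mathcal{A}^*\to\mathcal{B}^*$ a return morphism for $w$. Then $Y=\sigma\cdot X$ is eventually dendric. More precisely, suppose $N\in\mathbb{N}$ is such that (i) for every left special $v\in\mathcal{L}(X)$ with $|v|\ge N$ there is a unique letter $a$ with $va$ left special, and moreover $E^L_X(va)=E^L_X(v)$, and (ii) for every right special $v\in\mathcal{L}(X)$ with $|v|\ge N$ there is a unique letter $a$ with $av$ right special, and moreover $E^R_X(av)=E^R_X(v)$. Then the dendricity threshold of $Y$ is at most $\max_{a\in\mathcal{A}}|\sigma(a)|\,(N+1)+|w|-1$.
   Context: A shift space over $\mathcal{A}$ is a nonempty closed shift-invariant $X\subseteq\mathcal{A}^{\mathbb{Z}}$ with language $\mathcal{L}(X)$ containing all letters. For $w\in\mathcal{L}(X)$: $E^L_X(w)=\{a:aw\in\mathcal{L}(X)\}$, $E^R_X(w)=\{b:wb\in\mathcal{L}(X)\}$, $E_X(w)=\{(a,b):awb\in\mathcal{L}(X)\}$; $w$ is left (right) special if $|E^L_X(w)|\ge2$ ($|E^R_X(w)|\ge2$). The extension graph $\mathcal{E}_X(w)$ is the bipartite graph on the disjoint union of copies of $E^L_X(w)$ and $E^R_X(w)$ with edges given by $E_X(w)$; $w$ is dendric if it is a tree. $X$ is eventually dendric if there is $N$ such that all words of $\mathcal{L}(X)$ of length at least $N$ are dendric; the smallest such $N$ is the threshold. Morphisms are non-erasing; $\sigma\cdot X=\{S^k\sigma(x):x\in X,0\le k<|\sigma(x_0)|\}$.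 A return morphism for $w\in\mathcal{B}^+$ is an injective morphism $\sigma$ with $\sigma(a)w$ containing exactly two occurrences of $w$, as a proper prefix and a proper suffix, for every letter $a$. *)

theory Defs
  imports Main
begin

definition shift_map :: "(int \<Rightarrow> 'a) \<Rightarrow> int \<Rightarrow> 'a" where
  "shift_map x = (\<lambda>n. x (n + 1))"

text \<open>Closedness in the product topology of discrete spaces, unfolded via cylinders.\<close>
definition seq_closed :: "(int \<Rightarrow> 'a) set \<Rightarrow> bool" where
  "seq_closed X \<longleftrightarrow>
     (\<forall>x. (\<forall>n::nat. \<exists>y\<in>X. \<forall>i. \<bar>i\<bar> \<le> int n \<longrightarrow> y i = x i) \<longrightarrow> x \<in> X)"

definition lang :: "(int \<Rightarrow> 'a) set \<Rightarrow> 'a list set" where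
  "lang X = {u. \<exists>x\<in>X. \<exists>i::int. u = map (\<lambda>k. x (i + int k)) [0..<length u]}"

definition shift_space :: "(int \<Rightarrow> 'a) set \<Rightarrow> bool" where
  "shift_space X \<longleftrightarrow> X \<noteq> {} \<and> seq_closed X \<and> shift_map ` X = X
      \<and> (\<forall>a. [a] \<in> lang X)"

definition ext_L :: "(int \<Rightarrow> 'a) set \<Rightarrow> 'a list \<Rightarrow> 'a set" where
  "ext_L X u = {a. a # u \<in> lang X}"

definition ext_R :: "(int \<Rightarrow> 'a) set \<Rightarrow> 'a list \<Rightarrow> 'a set" where
  "ext_R X u = {b. u @ [b] \<in> lang X}"

definition ext_B :: "(int \<Rightarrow> 'a) set \<Rightarrow> 'a list \<Rightarrow> ('a \<times> 'a) set" where
  "ext_B X u = {(a, b). a # u @ [b] \<in> lang X}"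

definition left_special :: "(int \<Rightarrow> 'a) set \<Rightarrow> 'a list \<Rightarrow> bool" where
  "left_special X u \<longleftrightarrow> card (ext_L X u) \<ge> 2"

definition right_special :: "(int \<Rightarrow> 'a) set \<Rightarrow> 'a list \<Rightarrow> bool" where
  "right_special X u \<longleftrightarrow> card (ext_R X u) \<ge> 2"

definition graph_connected :: "'v set \<Rightarrow> ('v \<Rightarrow> 'v \<Rightarrow> bool) \<Rightarrow> bool" where
  "graph_connected V E \<longleftrightarrow>
     (\<forall>u\<in>V. \<forall>v\<in>V. (u, v) \<in> ({(p, q). p \<in> V \<and> q \<in> V \<and> E p q})\<^sup>*)"

definition graph_cycle :: "'v set \<Rightarrow> ('v \<Rightarrow> 'v \<Rightarrow> bool) \<Rightarrow> 'v list \<Rightarrow> bool" where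
  "graph_cycle V E cs \<longleftrightarrow> length cs \<ge> 3 \<and> distinct cs \<and> set cs \<subseteq> V \<and>
     (\<forall>i<length cs. E (cs ! i) (cs ! ((i + 1) mod length cs)))"

definition graph_tree :: "'v set \<Rightarrow> ('v \<Rightarrow> 'v \<Rightarrow> bool) \<Rightarrow> bool" where
  "graph_tree V E \<longleftrightarrow> V \<noteq> {} \<and> graph_connected V E \<and> (\<nexists>cs. graph_cycle V E cs)"

definition ext_graph_V :: "(int \<Rightarrow> 'a) set \<Rightarrow> 'a list \<Rightarrow> ('a + 'a) set" where
  "ext_graph_V X u = Inl ` ext_L X u \<union> Inr ` ext_R X u"

definition ext_graph_E :: "(int \<Rightarrow> 'a) set \<Rightarrow> 'a list \<Rightarrow> ('a + 'a) \<Rightarrow> ('a + 'a) \<Rightarrow> bool" where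
  "ext_graph_E X u p q \<longleftrightarrow>
     (\<exists>a b. (a, b) \<in> ext_B X u \<and> ((p = Inl a \<and> q = Inr b) \<or> (p = Inr b \<and> q = Inl a)))"

definition dendric :: "(int \<Rightarrow> 'a) set \<Rightarrow> 'a list \<Rightarrow> bool" where
  "dendric X u \<longleftrightarrow> graph_tree (ext_graph_V X u) (ext_graph_E X u)"

definition eventually_dendric :: "(int \<Rightarrow> 'a) set \<Rightarrow> bool" where
  "eventually_dendric X \<longleftrightarrow> (\<exists>N. \<forall>u\<in>lang X. length u \<ge> N \<longrightarrow> dendric X u)"

definition dendric_threshold :: "(int \<Rightarrow> 'a) set \<Rightarrow> nat" where
  "dendric_threshold X = (LEAST N. \<forall>u\<in>lang X. length u \<ge> N \<longrightarrow> dendric X u)"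

definition morph_word :: "('a \<Rightarrow> 'b list) \<Rightarrow> 'a list \<Rightarrow> 'b list" where
  "morph_word \<sigma> u = concat (map \<sigma> u)"

definition non_erasing :: "('a \<Rightarrow> 'b list) \<Rightarrow> bool" where
  "non_erasing \<sigma> \<longleftrightarrow> (\<forall>a. \<sigma> a \<noteq> [])"

definition occurrences :: "'b list \<Rightarrow> 'b list \<Rightarrow> nat set" where
  "occurrences w v = {i. i + length w \<le> length v \<and> take (length w) (drop i v) = w}"

definition return_morphism :: "('a \<Rightarrow> 'b list) \<Rightarrow> 'b list \<Rightarrow> bool" where
  "return_morphism \<sigma> w \<longleftrightarrow> w \<noteq> [] \<and> non_erasing \<sigma> \<and> inj (morph_word \<sigma>) \<and>
     (\<forall>a. occurrences w (\<sigma> a @ w) = {0, length (\<sigma> a)} \<and> length (\<sigma> a) \<noteq> 0)"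

text \<open>Position in sigma(x) where the block sigma(x_i) starts (sigma(x_0) starts at 0).\<close>
definition block_pos :: "('a \<Rightarrow> 'b list) \<Rightarrow> (int \<Rightarrow> 'a) \<Rightarrow> int \<Rightarrow> int" where
  "block_pos \<sigma> x i =
     (if i \<ge> 0 then (\<Sum>t\<in>{0..<i}. int (length (\<sigma> (x t))))
      else - (\<Sum>t\<in>{i..<0}. int (length (\<sigma> (x t)))))"

text \<open>sigma . X = { S^k sigma(x) : x in X, 0 <= k < |sigma(x_0)| }, where y = S^k sigma(x) is
  characterised by y(n) = sigma(x)(n+k).\<close>
definition morph_shift :: "('a \<Rightarrow> 'b list) \<Rightarrow> (int \<Rightarrow> 'a) set \<Rightarrow> (int \<Rightarrow> 'b) set" where
  "morph_shift \<sigma> X = {y. \<exists>x\<in>X. \<exists>k::int. 0 \<le> k \<and> k < int (length (\<sigma> (x 0))) \<and>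
       (\<forall>i. \<forall>j<length (\<sigma> (x i)). y (block_pos \<sigma> x i + int j - k) = \<sigma> (x i) ! j)}"

end

theory Submission
  imports Defs
begin

text \<open>
  Eventual dendricity forces the special factors of X to stabilise as in (i) and (ii). Weight
  every left special word of length n exponentially in its number of left extensions. Beyond the
  dendric threshold extension graphs contain no 4-cycle, so a left special word with two left
  special right extensions loses a left extension in each of them; hence the total weight of
  length n does not increase with n, and it strictly decreases unless (i) holds at length n.
  A non-increasing sequence of naturals is eventually constant. Right special words are handled
  in the mirror language. Under (i) and (ii) the extensions of a long word of X form a double
  star: all of them share a left centre or a right centre, which makes the extension graph a tree.

  For Y = \<sigma>\<cdot>X, the return word w occurs in \<sigma>(V)w exactly at the block boundaries. A word u
  of Y of length at least max|\<sigma>(a)|(N + 1) + |w| - 1 therefore contains w near both of its ends,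
  and the part of u between the first and the last occurrence of w is the image of a factor v of
  X of length at least N, unique by injectivity of \<sigma>. An extension (c, d) of u comes from an
  extension (a, b) of v, where c is the letter of \<sigma>(a) preceding u and d the letter of \<sigma>(b)w
  following u; this partial map sends the double star of v onto a double star for u.
\<close>

section \<open>Languages of shift spaces\<close>

lemma lang_prefix: "u @ v \<in> lang X \<Longrightarrow> u \<in> lang X"
proof -
  assume "u @ v \<in> lang X"
  then obtain x i where x: "x \<in> X" and e: "u @ v = map (\<lambda>k. x (i + int k)) [0..<length (u @ v)]"
    unfolding lang_def by blast
  have "u = map (\<lambda>k. x (i + int k)) [0..<length u]"
  proof (rule nth_equalityI)
    fix k assume "k < length u"
    then show "u ! k = map (\<lambda>k. x (i + int k)) [0..<length u] ! k"
      using arg_cong[OF e, of "\<lambda>l. l ! k"] by (simp add: nth_append)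
  qed simp
  with x show ?thesis unfolding lang_def by blast
qed

lemma lang_suffix: "u @ v \<in> lang X \<Longrightarrow> v \<in> lang X"
proof -
  assume "u @ v \<in> lang X"
  then obtain x i where x: "x \<in> X" and e: "u @ v = map (\<lambda>k. x (i + int k)) [0..<length (u @ v)]"
    unfolding lang_def by blast
  have "v = map (\<lambda>k. x ((i + int (length u)) + int k)) [0..<length v]"
  proof (rule nth_equalityI)
    fix k assume "k < length v"
    then show "v ! k = map (\<lambda>k. x ((i + int (length u)) + int k)) [0..<length v] ! k"
      using arg_cong[OF e, of "\<lambda>l. l ! (length u + k)"] by (simp add: nth_append add.assoc)
  qed simp
  with x show ?thesis unfolding lang_def by blast
qed

lemma lang_infix: "p @ u @ q \<in> lang X \<Longrightarrow> u \<in> lang X"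
  by (metis lang_prefix lang_suffix)

lemma lang_drop_take: "V \<in> lang X \<Longrightarrow> drop j (take j' V) \<in> lang X"
  by (metis append_take_drop_id lang_prefix lang_suffix)

lemma lang_extend_both_sides:
  assumes "V \<in> lang X"
  shows "\<exists>a b. a # V @ [b] \<in> lang X"
proof -
  obtain x i where x: "x \<in> X" and V: "V = map (\<lambda>k. x (i + int k)) [0..<length V]"
    using assms unfolding lang_def by blast
  define W where "W = x (i - 1) # V @ [x (i + int (length V))]"
  have "W = map (\<lambda>k. x ((i - 1) + int k)) [0..<length W]"
  proof (rule nth_equalityI)
    fix k assume k: "k < length W"
    have "V ! k' = x (i + int k')" if "k' < length V" for k'
      using arg_cong[OF V, of "\<lambda>l. l ! k'"] that by simp
    then have "W ! k = x ((i - 1) + int k)"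
      using k unfolding W_def by (cases k) (auto simp: nth_append nth_Cons' less_Suc_eq)
    then show "W ! k = map (\<lambda>k. x ((i - 1) + int k)) [0..<length W] ! k"
      using k by (simp del: upt_Suc)
  qed simp
  then have "W \<in> lang X"
    unfolding lang_def using x by blast
  then show ?thesis unfolding W_def by blast
qed

lemma shift_space_translate:
  assumes "shift_space X" and x: "x \<in> X"
  shows "(\<lambda>n. x (n + i)) \<in> X"
proof -
  have img: "shift_map ` X = X" using assms(1) by (simp add: shift_space_def)
  have forward: "(\<lambda>n. x (n + int m)) \<in> X" for m
  proof (induction m)
    case (Suc m)
    then have "shift_map (\<lambda>n. x (n + int m)) \<in> X" using img by blast
    then show ?case unfolding shift_map_def by (simp add: algebra_simps)
  qed (use x in simp)
  have backward: "(\<lambda>n. x (n - int m)) \<in> X" for m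
  proof (induction m)
    case (Suc m)
    then obtain z where z: "z \<in> X" "shift_map z = (\<lambda>n. x (n - int m))" using img by (metis imageE)
    have "z = (\<lambda>n. x (n - int (Suc m)))"
    proof
      fix n
      have "z n = shift_map z (n - 1)" unfolding shift_map_def by simp
      then show "z n = x (n - int (Suc m))" using z(2) by (simp add: algebra_simps)
    qed
    then show ?case using z by simp
  qed (use x in simp)
  show ?thesis
  proof (cases "i \<ge> 0")
    case True
    then show ?thesis using forward[of "nat i"] by simp
  next
    case False
    then show ?thesis using backward[of "nat (- i)"] by simp
  qed
qed

lemma ext_B_ext_L: "(a, b) \<in> ext_B X u \<Longrightarrow> a \<in> ext_L X u"
  using lang_prefix[of "a # u" "[b]"] by (simp add: ext_B_def ext_L_def)

lemma ext_B_ext_R: "(a, b) \<in> ext_B X u \<Longrightarrow> b \<in> ext_R X u"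
  using lang_suffix[of "[a]" "u @ [b]"] by (simp add: ext_B_def ext_R_def)

lemma two_le_card_iff: "finite S \<Longrightarrow> 2 \<le> card S \<longleftrightarrow> (\<exists>x\<in>S. \<exists>y\<in>S. x \<noteq> y)"
  by (metis card_le_Suc0_iff_eq not_less_eq_eq numeral_2_eq_2)

section \<open>Double stars and dendric words\<close>

definition double_star :: "('a \<times> 'b) set \<Rightarrow> bool" where
  "double_star B \<longleftrightarrow> (\<exists>\<alpha> \<beta>. (\<alpha>, \<beta>) \<in> B \<and> (\<forall>(a, b) \<in> B. a = \<alpha> \<or> b = \<beta>))"

lemma ext_graph_E_Inl: "ext_graph_E X u (Inl a) q \<longleftrightarrow> (\<exists>b. q = Inr b \<and> (a, b) \<in> ext_B X u)"
  unfolding ext_graph_E_def by auto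

lemma ext_graph_E_Inr: "ext_graph_E X u (Inr b) q \<longleftrightarrow> (\<exists>a. q = Inl a \<and> (a, b) \<in> ext_B X u)"
  unfolding ext_graph_E_def by auto

lemma ext_graph_E_commute: "ext_graph_E X u p q \<longleftrightarrow> ext_graph_E X u q p"
  unfolding ext_graph_E_def by blast

lemma graph_cycle_two_neighbours:
  assumes cyc: "graph_cycle V E cs" and v: "v \<in> set cs"
  obtains p q where "p \<noteq> q" "E p v" "E v q"
proof -
  let ?n = "length cs"
  have n3: "3 \<le> ?n" and dist: "distinct cs"
    and edge: "\<And>i. i < ?n \<Longrightarrow> E (cs ! i) (cs ! ((i + 1) mod ?n))"
    using cyc unfolding graph_cycle_def by auto
  obtain i where i: "i < ?n" "v = cs ! i" using v by (metis in_set_conv_nth)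
  define i\<^sub>p where "i\<^sub>p = (if i = 0 then ?n - 1 else i - 1)"
  define i\<^sub>s where "i\<^sub>s = (i + 1) mod ?n"
  have ip: "i\<^sub>p < ?n" "(i\<^sub>p + 1) mod ?n = i"
    using i n3 unfolding i\<^sub>p_def by auto
  have is_lt: "i\<^sub>s < ?n" unfolding i\<^sub>s_def by (rule mod_less_divisor) (use n3 in linarith)
  have "i\<^sub>p \<noteq> i\<^sub>s" using i n3 unfolding i\<^sub>p_def i\<^sub>s_def by (auto simp: mod_Suc)
  then have "cs ! i\<^sub>p \<noteq> cs ! i\<^sub>s" using dist ip(1) is_lt by (simp add: nth_eq_iff_index_eq)
  moreover have "E (cs ! i\<^sub>p) v" "E v (cs ! i\<^sub>s)"
    using edge[OF ip(1)] edge[OF i(1)] ip(2) i(2) unfolding i\<^sub>s_def by simp_all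
  ultimately show ?thesis using that by blast
qed

text \<open>A vertex other than the two centres of a double star has a single neighbour, so it
  cannot lie on a cycle.\<close>
lemma double_star_no_cycle:
  assumes "double_star (ext_B X u)"
  shows "\<not> graph_cycle (ext_graph_V X u) (ext_graph_E X u) cs"
proof
  assume cyc: "graph_cycle (ext_graph_V X u) (ext_graph_E X u) cs"
  obtain \<alpha> \<beta> where ds: "\<And>a b. (a, b) \<in> ext_B X u \<Longrightarrow> a = \<alpha> \<or> b = \<beta>"
    using assms unfolding double_star_def by blast
  have "v \<in> {Inl \<alpha>, Inr \<beta>}" if v: "v \<in> set cs" for v
  proof (rule ccontr)
    assume other: "v \<notin> {Inl \<alpha>, Inr \<beta>}"
    obtain p q where "p \<noteq> q" "ext_graph_E X u v p" "ext_graph_E X u v q"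
      using graph_cycle_two_neighbours[OF cyc v] ext_graph_E_commute by metis
    then show False
    proof (cases v)
      case (Inl a)
      then have "a \<noteq> \<alpha>" using other by auto
      then show False using \<open>p \<noteq> q\<close> \<open>ext_graph_E X u v p\<close> \<open>ext_graph_E X u v q\<close> Inl ds
        by (auto simp: ext_graph_E_Inl)
    next
      case (Inr b)
      then have "b \<noteq> \<beta>" using other by auto
      then show False using \<open>p \<noteq> q\<close> \<open>ext_graph_E X u v p\<close> \<open>ext_graph_E X u v q\<close> Inr ds
        by (auto simp: ext_graph_E_Inr)
    qed
  qed
  then have "card (set cs) \<le> card {Inl \<alpha>, Inr \<beta>}" by (intro card_mono) auto
  then have "card (set cs) \<le> 2" by simp
  then show False using cyc distinct_card unfolding graph_cycle_def by fastforce
qed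

lemma dendric_if_double_star:
  assumes ds: "double_star (ext_B X u)"
    and left: "\<And>a. a \<in> ext_L X u \<Longrightarrow> \<exists>b. (a, b) \<in> ext_B X u"
    and right: "\<And>b. b \<in> ext_R X u \<Longrightarrow> \<exists>a. (a, b) \<in> ext_B X u"
  shows "dendric X u"
proof -
  obtain \<alpha> \<beta> where \<alpha>\<beta>: "(\<alpha>, \<beta>) \<in> ext_B X u"
    and star: "\<And>a b. (a, b) \<in> ext_B X u \<Longrightarrow> a = \<alpha> \<or> b = \<beta>"
    using ds unfolding double_star_def by blast
  define V where "V = ext_graph_V X u"
  define rel where "rel = {(p, q). p \<in> V \<and> q \<in> V \<and> ext_graph_E X u p q}"
  have edge: "(Inl a, Inr b) \<in> rel" "(Inr b, Inl a) \<in> rel" if "(a, b) \<in> ext_B X u" for a b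
    using ext_B_ext_L[OF that] ext_B_ext_R[OF that] that
    unfolding rel_def V_def ext_graph_V_def ext_graph_E_def by auto
  have to_centre: "(p, Inl \<alpha>) \<in> rel\<^sup>* \<and> (Inl \<alpha>, p) \<in> rel\<^sup>*" if p: "p \<in> V" for p
  proof (cases p)
    case (Inl a)
    then obtain b where "(a, b) \<in> ext_B X u"
      using p left unfolding V_def ext_graph_V_def by auto
    then have "(a, \<beta>) \<in> ext_B X u" using star \<alpha>\<beta> by blast
    then show ?thesis using edge[OF \<alpha>\<beta>] edge[of a \<beta>] Inl
      by (meson converse_rtrancl_into_rtrancl r_into_rtrancl rtrancl_into_rtrancl)
  next
    case (Inr b)
    then obtain a where "(a, b) \<in> ext_B X u"
      using p right unfolding V_def ext_graph_V_def by auto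
    then have "(\<alpha>, b) \<in> ext_B X u" using star \<alpha>\<beta> by blast
    then show ?thesis using edge[of \<alpha> b] Inr by blast
  qed
  have "graph_connected V (ext_graph_E X u)"
    unfolding graph_connected_def rel_def[symmetric] using to_centre by (meson rtrancl_trans)
  moreover have "V \<noteq> {}"
    using ext_B_ext_L[OF \<alpha>\<beta>] unfolding V_def ext_graph_V_def by blast
  ultimately show ?thesis
    using double_star_no_cycle[OF ds] unfolding dendric_def graph_tree_def V_def by blast
qed

lemma dendric_no_square:
  assumes "dendric X u" and "a\<^sub>1 \<noteq> a\<^sub>2" "b\<^sub>1 \<noteq> b\<^sub>2"
    and "(a\<^sub>1, b\<^sub>1) \<in> ext_B X u" "(a\<^sub>2, b\<^sub>1) \<in> ext_B X u"
    and "(a\<^sub>1, b\<^sub>2) \<in> ext_B X u" "(a\<^sub>2, b\<^sub>2) \<in> ext_B X u"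
  shows False
proof -
  let ?cs = "[Inl a\<^sub>1, Inr b\<^sub>1, Inl a\<^sub>2, Inr b\<^sub>2]"
  have "set ?cs \<subseteq> ext_graph_V X u"
    using ext_B_ext_L[OF assms(4)] ext_B_ext_L[OF assms(5)] ext_B_ext_R[OF assms(4)]
      ext_B_ext_R[OF assms(6)] unfolding ext_graph_V_def by auto
  moreover have "ext_graph_E X u (?cs ! i) (?cs ! ((i + 1) mod length ?cs))" if "i < length ?cs" for i
  proof -
    have "i = 0 \<or> i = 1 \<or> i = 2 \<or> i = 3" using that by auto
    then show ?thesis using assms(4-7) by (auto simp: ext_graph_E_def)
  qed
  ultimately have "graph_cycle (ext_graph_V X u) (ext_graph_E X u) ?cs"
    using assms(2,3) unfolding graph_cycle_def by auto
  then show False using assms(1) unfolding dendric_def graph_tree_def by blast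
qed

section \<open>Stabilisation of special factors\<close>

definition left_exts :: "'a list set \<Rightarrow> 'a list \<Rightarrow> 'a set" where
  "left_exts L v = {a. a # v \<in> L}"

definition left_special_words :: "'a list set \<Rightarrow> nat \<Rightarrow> 'a list set" where
  "left_special_words L n = {v. length v = n \<and> 2 \<le> card (left_exts L v)}"

definition special_children :: "'a list set \<Rightarrow> 'a list \<Rightarrow> 'a set" where
  "special_children L v = {b. 2 \<le> card (left_exts L (v @ [b]))}"

definition left_stable :: "'a list set \<Rightarrow> 'a list \<Rightarrow> bool" where
  "left_stable L v \<longleftrightarrow> (\<exists>!b. 2 \<le> card (left_exts L (v @ [b]))) \<and>
     (\<forall>b. 2 \<le> card (left_exts L (v @ [b])) \<longrightarrow> left_exts L (v @ [b]) = left_exts L v)"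

text \<open>The base exceeds the number of letters, so a word whose left extensions all survive in one
  special child outweighs any number of children that each lost a left extension.\<close>
definition ext_weight :: "'a::finite list set \<Rightarrow> 'a list \<Rightarrow> nat" where
  "ext_weight L v = Suc (card (UNIV :: 'a set)) ^ card (left_exts L v)"

definition special_potential :: "'a::finite list set \<Rightarrow> nat \<Rightarrow> nat" where
  "special_potential L n = (\<Sum>v\<in>left_special_words L n. ext_weight L v)"

lemma nat_antimono_eventually_constant:
  fixes f :: "nat \<Rightarrow> nat"
  assumes "\<And>n. T \<le> n \<Longrightarrow> f (Suc n) \<le> f n"
  shows "\<exists>N\<ge>T. \<forall>n\<ge>N. f (Suc n) = f n"
proof -
  obtain N where N: "T \<le> N" "\<And>n. T \<le> n \<Longrightarrow> f N \<le> f n"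
    using ex_has_least_nat[where P = "\<lambda>n. T \<le> n" and k = T and m = f] by auto
  have "f n \<le> f N" if "N \<le> n" for n
    using that
  proof (induction n rule: dec_induct)
    case (step m)
    then show ?case using assms[of m] N(1) by linarith
  qed simp
  then show ?thesis using N assms by (metis le_Suc_eq le_antisym le_trans)
qed

context
  fixes L :: "'a::finite list set" and T :: nat
  assumes drop_last: "\<And>a u b. a # u @ [b] \<in> L \<Longrightarrow> a # u \<in> L"
    and no_square: "\<And>u a\<^sub>1 a\<^sub>2 b\<^sub>1 b\<^sub>2. T \<le> length u \<Longrightarrow> a\<^sub>1 \<noteq> a\<^sub>2 \<Longrightarrow> b\<^sub>1 \<noteq> b\<^sub>2 \<Longrightarrow>
      a\<^sub>1 # u @ [b\<^sub>1] \<in> L \<Longrightarrow> a\<^sub>2 # u @ [b\<^sub>1] \<in> L \<Longrightarrow> a\<^sub>1 # u @ [b\<^sub>2] \<in> L \<Longrightarrow>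
      a\<^sub>2 # u @ [b\<^sub>2] \<in> L \<Longrightarrow> False"
begin

lemma left_exts_snoc_subset: "left_exts L (v @ [b]) \<subseteq> left_exts L v"
  using drop_last unfolding left_exts_def by auto

lemma special_sibling_shrinks:
  assumes "T \<le> length v" "b \<noteq> b'" "2 \<le> card (left_exts L (v @ [b']))"
  shows "card (left_exts L (v @ [b])) < card (left_exts L v)"
proof (rule ccontr)
  assume "\<not> ?thesis"
  then have "card (left_exts L (v @ [b])) = card (left_exts L v)"
    using card_mono[OF finite left_exts_snoc_subset, of v b] by linarith
  then have eq: "left_exts L (v @ [b]) = left_exts L v"
    using card_subset_eq[OF finite left_exts_snoc_subset] by blast
  obtain a\<^sub>1 a\<^sub>2 where "a\<^sub>1 \<in> left_exts L (v @ [b'])" "a\<^sub>2 \<in> left_exts L (v @ [b'])" "a\<^sub>1 \<noteq> a\<^sub>2"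
    using assms(3) two_le_card_iff[OF finite] by blast
  moreover from this have "a\<^sub>1 \<in> left_exts L (v @ [b])" "a\<^sub>2 \<in> left_exts L (v @ [b])"
    using eq left_exts_snoc_subset by blast+
  ultimately show False
    using no_square[OF assms(1)] assms(2) unfolding left_exts_def by simp
qed

lemma branching_children_weight_less:
  assumes v: "2 \<le> card (left_exts L v)" "T \<le> length v"
    and branch: "b\<^sub>1 \<in> special_children L v" "b\<^sub>2 \<in> special_children L v" "b\<^sub>1 \<noteq> b\<^sub>2"
  shows "(\<Sum>b\<in>special_children L v. ext_weight L (v @ [b])) < ext_weight L v"
proof -
  define K :: nat where "K = Suc (card (UNIV :: 'a set))"
  define p where "p = card (left_exts L v)"
  have shrink: "card (left_exts L (v @ [b])) \<le> p - 1" if "b \<in> special_children L v" for b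
  proof -
    obtain b' where "b' \<in> special_children L v" "b \<noteq> b'" using branch by blast
    then show ?thesis
      using special_sibling_shrinks[OF v(2)] unfolding special_children_def p_def by fastforce
  qed
  have "(\<Sum>b\<in>special_children L v. ext_weight L (v @ [b])) \<le> (\<Sum>b\<in>special_children L v. K ^ (p - 1))"
    unfolding ext_weight_def K_def[symmetric] by (intro sum_mono power_increasing shrink) (simp_all add: K_def)
  also have "\<dots> \<le> card (UNIV :: 'a set) * K ^ (p - 1)"
    by (simp add: card_mono)
  also have "\<dots> < K ^ p"
    using v(1) unfolding K_def p_def by (cases "card (left_exts L v)") simp_all
  finally show ?thesis unfolding ext_weight_def K_def p_def .
qed

lemma ext_weight_snoc_le: "ext_weight L (v @ [b]) \<le> ext_weight L v"
  unfolding ext_weight_def by (intro power_increasing card_mono) (simp_all add: left_exts_snoc_subset)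

lemma left_stable_if_single_child:
  assumes "special_children L v = {b}" and "ext_weight L (v @ [b]) = ext_weight L v"
  shows "left_stable L v"
proof -
  have "1 < Suc (card (UNIV :: 'a set))" by (simp add: finite_UNIV_card_ge_0)
  then have "left_exts L (v @ [b]) = left_exts L v"
    using assms(2) card_subset_eq[OF finite left_exts_snoc_subset] unfolding ext_weight_def by simp
  moreover have "2 \<le> card (left_exts L (v @ [b'])) \<longleftrightarrow> b' = b" for b'
    using assms(1) unfolding special_children_def by blast
  ultimately show ?thesis unfolding left_stable_def by auto
qed

lemma children_weight_le:
  assumes v: "2 \<le> card (left_exts L v)" "T \<le> length v"
  shows "(\<Sum>b\<in>special_children L v. ext_weight L (v @ [b])) \<le> ext_weight L v"
    and "(\<Sum>b\<in>special_children L v. ext_weight L (v @ [b])) = ext_weight L v \<Longrightarrow> left_stable L v"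
proof -
  let ?S = "\<Sum>b\<in>special_children L v. ext_weight L (v @ [b])"
  consider (branching) b\<^sub>1 b\<^sub>2 where "b\<^sub>1 \<in> special_children L v" "b\<^sub>2 \<in> special_children L v" "b\<^sub>1 \<noteq> b\<^sub>2"
    | (none) "special_children L v = {}" | (single) b where "special_children L v = {b}"
    by blast
  then have "?S < ext_weight L v \<or> ?S \<le> ext_weight L v \<and> (?S = ext_weight L v \<longrightarrow> left_stable L v)"
  proof cases
    case branching
    then show ?thesis using branching_children_weight_less[OF v] by blast
  next
    case none
    then show ?thesis by (simp add: ext_weight_def)
  next
    case (single b)
    then show ?thesis using ext_weight_snoc_le left_stable_if_single_child by simp
  qed
  then show "?S \<le> ext_weight L v" and "?S = ext_weight L v \<Longrightarrow> left_stable L v" by auto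
qed

lemma left_special_words_Suc:
  "left_special_words L (Suc n) = (\<lambda>(v, b). v @ [b]) `
     (SIGMA v:left_special_words L n. special_children L v)"
proof -
  have "2 \<le> card (left_exts L v)" if "2 \<le> card (left_exts L (v @ [b]))" for v b
    using that card_mono[OF finite left_exts_snoc_subset, of v b] by linarith
  then show ?thesis
    unfolding left_special_words_def special_children_def
    by (auto simp: image_iff length_Suc_conv_rev intro!: exI[of _ "butlast _"])
qed

lemma special_potential_Suc:
  "special_potential L (Suc n) =
     (\<Sum>v\<in>left_special_words L n. \<Sum>b\<in>special_children L v. ext_weight L (v @ [b]))"
proof -
  have fin: "finite (left_special_words L n)"
    by (rule finite_subset[OF _ finite_lists_length_eq[of UNIV n]]) (auto simp: left_special_words_def)
  have "inj_on (\<lambda>(v, b). v @ [b]) A" for A :: "('a list \<times> 'a) set"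
    by (rule inj_onI) auto
  then show ?thesis
    unfolding special_potential_def left_special_words_Suc
    by (simp add: sum.reindex sum.Sigma[OF fin] split_def)
qed

lemma special_potential_step:
  assumes "T \<le> n"
  shows "special_potential L (Suc n) \<le> special_potential L n"
    and "special_potential L (Suc n) = special_potential L n \<Longrightarrow>
         \<forall>v\<in>left_special_words L n. left_stable L v"
proof -
  have fin: "finite (left_special_words L n)"
    by (rule finite_subset[OF _ finite_lists_length_eq[of UNIV n]]) (auto simp: left_special_words_def)
  have v: "2 \<le> card (left_exts L v)" "T \<le> length v" if "v \<in> left_special_words L n" for v
    using that assms unfolding left_special_words_def by auto
  note le = children_weight_le(1)[OF v] and eq = children_weight_le(2)[OF v]
  show "special_potential L (Suc n) \<le> special_potential L n"
    unfolding special_potential_Suc by (unfold special_potential_def) (rule sum_mono, rule le)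
  show "\<forall>v\<in>left_special_words L n. left_stable L v"
    if "special_potential L (Suc n) = special_potential L n"
  proof (rule ccontr)
    assume "\<not> ?thesis"
    then obtain v where "v \<in> left_special_words L n" "\<not> left_stable L v" by blast
    then have "special_potential L (Suc n) < special_potential L n"
      unfolding special_potential_Suc using le eq
      by (unfold special_potential_def, intro sum_strict_mono_ex1[OF fin]) (auto simp: order.strict_iff_order)
    then show False using that by simp
  qed
qed

lemma eventually_left_stable: "\<exists>N. \<forall>v. 2 \<le> card (left_exts L v) \<and> N \<le> length v \<longrightarrow> left_stable L v"
proof -
  obtain N where N: "T \<le> N" "\<And>n. N \<le> n \<Longrightarrow> special_potential L (Suc n) = special_potential L n"
    using nat_antimono_eventually_constant[of T "special_potential L"] special_potential_step(1)
    by blast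
  have "left_stable L v" if "2 \<le> card (left_exts L v)" "N \<le> length v" for v
    using special_potential_step(2)[of "length v"] N that unfolding left_special_words_def by simp
  then show ?thesis by blast
qed

end

lemma ext_L_eq_left_exts: "ext_L X v = left_exts (lang X) v"
  unfolding ext_L_def left_exts_def ..

lemma ext_R_eq_left_exts_rev: "ext_R X v = left_exts (rev ` lang X) (rev v)"
  unfolding ext_R_def left_exts_def by (metis (no_types) rev.simps(2) rev_rev_ident image_iff)

definition special_stable :: "(int \<Rightarrow> 'a) set \<Rightarrow> nat \<Rightarrow> bool" where
  "special_stable X N \<longleftrightarrow>
     (\<forall>v\<in>lang X. left_special X v \<and> length v \<ge> N \<longrightarrow>
        (\<exists>!a. left_special X (v @ [a])) \<and>
        (\<forall>a. left_special X (v @ [a]) \<longrightarrow> ext_L X (v @ [a]) = ext_L X v)) \<and>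
     (\<forall>v\<in>lang X. right_special X v \<and> length v \<ge> N \<longrightarrow>
        (\<exists>!a. right_special X (a # v)) \<and>
        (\<forall>a. right_special X (a # v) \<longrightarrow> ext_R X (a # v) = ext_R X v))"

lemma special_stable_leftD:
  assumes "special_stable X N" "v \<in> lang X" "left_special X v" "N \<le> length v"
  shows "\<exists>!a. left_special X (v @ [a])"
    and "left_special X (v @ [a]) \<Longrightarrow> ext_L X (v @ [a]) = ext_L X v"
  using assms unfolding special_stable_def by auto

lemma special_stable_rightD:
  assumes "special_stable X N" "v \<in> lang X" "right_special X v" "N \<le> length v"
  shows "\<exists>!a. right_special X (a # v)"
  using assms unfolding special_stable_def by auto

lemma eventually_dendric_no_square:
  assumes "eventually_dendric X"
  obtains T where "\<And>u a\<^sub>1 a\<^sub>2 b\<^sub>1 b\<^sub>2. T \<le> length u \<Longrightarrow> a\<^sub>1 \<noteq> a\<^sub>2 \<Longrightarrow> b\<^sub>1 \<noteq> b\<^sub>2 \<Longrightarrow>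
      a\<^sub>1 # u @ [b\<^sub>1] \<in> lang X \<Longrightarrow> a\<^sub>2 # u @ [b\<^sub>1] \<in> lang X \<Longrightarrow> a\<^sub>1 # u @ [b\<^sub>2] \<in> lang X \<Longrightarrow>
      a\<^sub>2 # u @ [b\<^sub>2] \<in> lang X \<Longrightarrow> False"
proof -
  obtain T where T: "\<forall>u\<in>lang X. T \<le> length u \<longrightarrow> dendric X u"
    using assms unfolding eventually_dendric_def by blast
  show ?thesis
  proof (rule that)
    fix u a\<^sub>1 a\<^sub>2 b\<^sub>1 b\<^sub>2
    assume "T \<le> length u" "a\<^sub>1 \<noteq> a\<^sub>2" "b\<^sub>1 \<noteq> b\<^sub>2" and words: "a\<^sub>1 # u @ [b\<^sub>1] \<in> lang X"
      "a\<^sub>2 # u @ [b\<^sub>1] \<in> lang X" "a\<^sub>1 # u @ [b\<^sub>2] \<in> lang X" "a\<^sub>2 # u @ [b\<^sub>2] \<in> lang X"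
    moreover have "dendric X u"
      using T \<open>T \<le> length u\<close> lang_infix[of "[a\<^sub>1]" u "[b\<^sub>1]"] words(1) by simp
    ultimately show False
      by (intro dendric_no_square[of X u a\<^sub>1 a\<^sub>2 b\<^sub>1 b\<^sub>2]) (simp_all add: ext_B_def)
  qed
qed

lemma eventually_dendric_left_stable:
  fixes X :: "(int \<Rightarrow> 'a::finite) set"
  assumes "eventually_dendric X"
  shows "\<exists>N. \<forall>v. 2 \<le> card (left_exts (lang X) v) \<and> N \<le> length v \<longrightarrow> left_stable (lang X) v"
proof -
  obtain T where no_square: "\<And>u a\<^sub>1 a\<^sub>2 b\<^sub>1 b\<^sub>2. T \<le> length u \<Longrightarrow> a\<^sub>1 \<noteq> a\<^sub>2 \<Longrightarrow> b\<^sub>1 \<noteq> b\<^sub>2 \<Longrightarrow>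
      a\<^sub>1 # u @ [b\<^sub>1] \<in> lang X \<Longrightarrow> a\<^sub>2 # u @ [b\<^sub>1] \<in> lang X \<Longrightarrow> a\<^sub>1 # u @ [b\<^sub>2] \<in> lang X \<Longrightarrow>
      a\<^sub>2 # u @ [b\<^sub>2] \<in> lang X \<Longrightarrow> False"
    using eventually_dendric_no_square[OF assms] by blast
  show ?thesis
  proof (rule eventually_left_stable[of _ T])
    show "a # u \<in> lang X" if "a # u @ [b] \<in> lang X" for a u b
      using that lang_prefix[of "a # u" "[b]"] by simp
  qed (rule no_square)
qed

lemma eventually_dendric_right_stable:
  fixes X :: "(int \<Rightarrow> 'a::finite) set"
  assumes "eventually_dendric X"
  shows "\<exists>N. \<forall>v. 2 \<le> card (left_exts (rev ` lang X) v) \<and> N \<le> length v \<longrightarrow>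
    left_stable (rev ` lang X) v"
proof -
  obtain T where no_square: "\<And>u a\<^sub>1 a\<^sub>2 b\<^sub>1 b\<^sub>2. T \<le> length u \<Longrightarrow> a\<^sub>1 \<noteq> a\<^sub>2 \<Longrightarrow> b\<^sub>1 \<noteq> b\<^sub>2 \<Longrightarrow>
      a\<^sub>1 # u @ [b\<^sub>1] \<in> lang X \<Longrightarrow> a\<^sub>2 # u @ [b\<^sub>1] \<in> lang X \<Longrightarrow> a\<^sub>1 # u @ [b\<^sub>2] \<in> lang X \<Longrightarrow>
      a\<^sub>2 # u @ [b\<^sub>2] \<in> lang X \<Longrightarrow> False"
    using eventually_dendric_no_square[OF assms] by blast
  have mirror: "z \<in> rev ` lang X \<longleftrightarrow> rev z \<in> lang X" for z
    by (metis image_iff rev_rev_ident)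
  show ?thesis
  proof (rule eventually_left_stable[of _ T])
    show "a # u \<in> rev ` lang X" if "a # u @ [b] \<in> rev ` lang X" for a u b
      using that lang_suffix[of "[b]" "rev u @ [a]" X] by (simp add: mirror)
    show False if "T \<le> length u" "a\<^sub>1 \<noteq> a\<^sub>2" "b\<^sub>1 \<noteq> b\<^sub>2" "a\<^sub>1 # u @ [b\<^sub>1] \<in> rev ` lang X"
      "a\<^sub>2 # u @ [b\<^sub>1] \<in> rev ` lang X" "a\<^sub>1 # u @ [b\<^sub>2] \<in> rev ` lang X"
      "a\<^sub>2 # u @ [b\<^sub>2] \<in> rev ` lang X" for u a\<^sub>1 a\<^sub>2 b\<^sub>1 b\<^sub>2
      using no_square[of "rev u" b\<^sub>1 b\<^sub>2 a\<^sub>1 a\<^sub>2] that by (simp add: mirror)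
  qed
qed

lemma eventually_dendric_special_stable:
  fixes X :: "(int \<Rightarrow> 'a::finite) set"
  assumes "eventually_dendric X"
  shows "\<exists>N. special_stable X N"
proof -
  obtain N\<^sub>L where N\<^sub>L: "\<And>v. 2 \<le> card (left_exts (lang X) v) \<Longrightarrow> N\<^sub>L \<le> length v \<Longrightarrow>
      left_stable (lang X) v"
    using eventually_dendric_left_stable[OF assms] by blast
  obtain N\<^sub>R where N\<^sub>R: "\<And>v. 2 \<le> card (left_exts (rev ` lang X) v) \<Longrightarrow> N\<^sub>R \<le> length v \<Longrightarrow>
      left_stable (rev ` lang X) v"
    using eventually_dendric_right_stable[OF assms] by blast
  have "special_stable X (max N\<^sub>L N\<^sub>R)"
    unfolding special_stable_def left_special_def right_special_def
  proof (intro conjI ballI impI allI; elim conjE)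
    fix v assume "2 \<le> card (ext_L X v)" "max N\<^sub>L N\<^sub>R \<le> length v"
    then have "left_stable (lang X) v" using N\<^sub>L[of v] by (simp add: ext_L_eq_left_exts)
    then show "\<exists>!a. 2 \<le> card (ext_L X (v @ [a]))"
      and "2 \<le> card (ext_L X (v @ [a])) \<Longrightarrow> ext_L X (v @ [a]) = ext_L X v" for a
      unfolding left_stable_def ext_L_eq_left_exts by blast+
  next
    fix v assume "2 \<le> card (ext_R X v)" "max N\<^sub>L N\<^sub>R \<le> length v"
    then have "left_stable (rev ` lang X) (rev v)" using N\<^sub>R[of "rev v"] by (simp add: ext_R_eq_left_exts_rev)
    then show "\<exists>!a. 2 \<le> card (ext_R X (a # v))"
      and "2 \<le> card (ext_R X (a # v)) \<Longrightarrow> ext_R X (a # v) = ext_R X v" for a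
      unfolding left_stable_def ext_R_eq_left_exts_rev by simp_all
  qed
  then show ?thesis ..
qed

text \<open>An extension (a, b) with a \<noteq> a0 and b \<noteq> b0 would make a v right special, since a v b0
  is a word as well.\<close>
lemma double_star_ext_B_bispecial:
  fixes X :: "(int \<Rightarrow> 'a::finite) set"
  assumes b\<^sub>0: "ext_L X (v @ [b\<^sub>0]) = ext_L X v"
    and a\<^sub>0: "right_special X (a\<^sub>0 # v)" "\<And>a. right_special X (a # v) \<Longrightarrow> a = a\<^sub>0"
  shows "double_star (ext_B X v)"
proof -
  obtain b where "a\<^sub>0 # v @ [b] \<in> lang X"
    using a\<^sub>0(1) unfolding right_special_def two_le_card_iff[OF finite] ext_R_def by auto
  then have "a\<^sub>0 \<in> ext_L X v"
    using lang_prefix[of "a\<^sub>0 # v" "[b]"] unfolding ext_L_def by simp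
  then have "(a\<^sub>0, b\<^sub>0) \<in> ext_B X v"
    using b\<^sub>0 unfolding ext_L_def ext_B_def by auto
  moreover have "a = a\<^sub>0 \<or> b = b\<^sub>0" if ab: "(a, b) \<in> ext_B X v" for a b
  proof (rule ccontr)
    assume off_centre: "\<not> (a = a\<^sub>0 \<or> b = b\<^sub>0)"
    moreover have "a # v @ [b\<^sub>0] \<in> lang X"
      using ext_B_ext_L[OF ab] b\<^sub>0 unfolding ext_L_def by auto
    ultimately have "right_special X (a # v)"
      using ab two_le_card_iff[OF finite] unfolding right_special_def ext_R_def ext_B_def by auto
    then show False using a\<^sub>0(2) off_centre by blast
  qed
  ultimately show ?thesis unfolding double_star_def by blast
qed

lemma double_star_ext_B_not_bispecial:
  fixes X :: "(int \<Rightarrow> 'a::finite) set"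
  assumes ab\<^sub>1: "(a\<^sub>1, b\<^sub>1) \<in> ext_B X v" and "\<not> (left_special X v \<and> right_special X v)"
  shows "double_star (ext_B X v)"
proof -
  consider "\<not> left_special X v" | "\<not> right_special X v" using assms(2) by blast
  then show ?thesis
  proof cases
    case 1
    then have "a = a\<^sub>1" if "(a, b) \<in> ext_B X v" for a b
      using ext_B_ext_L[OF that] ext_B_ext_L[OF ab\<^sub>1] two_le_card_iff[OF finite]
      unfolding left_special_def by blast
    then show ?thesis using ab\<^sub>1 unfolding double_star_def by blast
  next
    case 2
    then have "b = b\<^sub>1" if "(a, b) \<in> ext_B X v" for a b
      using ext_B_ext_R[OF that] ext_B_ext_R[OF ab\<^sub>1] two_le_card_iff[OF finite]
      unfolding right_special_def by blast
    then show ?thesis using ab\<^sub>1 unfolding double_star_def by blast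
  qed
qed

lemma double_star_ext_B:
  fixes X :: "(int \<Rightarrow> 'a::finite) set"
  assumes stable: "special_stable X N" and v: "v \<in> lang X" "N \<le> length v"
  shows "double_star (ext_B X v)"
proof (cases "left_special X v \<and> right_special X v")
  case True
  obtain b\<^sub>0 where "ext_L X (v @ [b\<^sub>0]) = ext_L X v"
    using special_stable_leftD[OF stable v(1) _ v(2)] True by blast
  moreover obtain a\<^sub>0 where "right_special X (a\<^sub>0 # v)" "\<And>a. right_special X (a # v) \<Longrightarrow> a = a\<^sub>0"
    using special_stable_rightD[OF stable v(1) _ v(2)] True by blast
  ultimately show ?thesis by (rule double_star_ext_B_bispecial)
next
  case False
  obtain a\<^sub>1 b\<^sub>1 where "(a\<^sub>1, b\<^sub>1) \<in> ext_B X v"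
    using lang_extend_both_sides[OF v(1)] unfolding ext_B_def by blast
  then show ?thesis using False by (rule double_star_ext_B_not_bispecial)
qed

section \<open>Return morphisms and synchronisation\<close>

lemma morph_word_Nil [simp]: "morph_word \<sigma> [] = []"
  by (simp add: morph_word_def)

lemma morph_word_Cons [simp]: "morph_word \<sigma> (a # v) = \<sigma> a @ morph_word \<sigma> v"
  by (simp add: morph_word_def)

lemma morph_word_append [simp]: "morph_word \<sigma> (u @ v) = morph_word \<sigma> u @ morph_word \<sigma> v"
  by (simp add: morph_word_def)

lemma length_morph_word_le: "(\<And>a. length (\<sigma> a) \<le> M) \<Longrightarrow> length (morph_word \<sigma> V) \<le> M * length V"
  by (induction V) (simp_all add: add_mono)

lemma return_morphism_occurrences: "return_morphism \<sigma> w \<Longrightarrow> occurrences w (\<sigma> a @ w) = {0, length (\<sigma> a)}"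
  by (simp add: return_morphism_def)

lemma return_morphism_nonempty: "return_morphism \<sigma> w \<Longrightarrow> \<sigma> a \<noteq> []"
  by (simp add: return_morphism_def non_erasing_def)

lemma length_morph_word_ge: "return_morphism \<sigma> w \<Longrightarrow> length V \<le> length (morph_word \<sigma> V)"
proof (induction V)
  case (Cons a V)
  have "0 < length (\<sigma> a)" using return_morphism_nonempty[OF Cons.prems, of a] by simp
  then show ?case using Cons.IH[OF Cons.prems] by (simp del: length_greater_0_conv)
qed simp

lemma return_morphism_prefix: "return_morphism \<sigma> w \<Longrightarrow> \<exists>t. \<sigma> a @ w = w @ t"
proof -
  assume "return_morphism \<sigma> w"
  then have "0 \<in> occurrences w (\<sigma> a @ w)" by (simp add: return_morphism_occurrences)
  then have "take (length w) (\<sigma> a @ w) = w" by (simp add: occurrences_def)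
  then show ?thesis by (metis append_take_drop_id)
qed

lemma morph_word_return_prefix: "return_morphism \<sigma> w \<Longrightarrow> \<exists>t. morph_word \<sigma> V @ w = w @ t"
proof (induction V)
  case (Cons a V)
  obtain t where "morph_word \<sigma> V @ w = w @ t" using Cons by blast
  moreover obtain t' where "\<sigma> a @ w = w @ t'" using return_morphism_prefix[OF Cons.prems] by blast
  ultimately have "morph_word \<sigma> (a # V) @ w = w @ t' @ t" by (metis append.assoc morph_word_Cons)
  then show ?case by blast
qed simp

lemma finite_occurrences: "finite (occurrences w u)"
  by (rule finite_subset[of _ "{..length u}"]) (auto simp: occurrences_def)

lemma occurrences_Min_Max:
  assumes "occurrences w u \<noteq> {}"
  shows "Min (occurrences w u) \<in> occurrences w u" and "Max (occurrences w u) \<in> occurrences w u"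
    and "Min (occurrences w u) \<le> Max (occurrences w u)"
    and "Max (occurrences w u) + length w \<le> length u"
proof -
  show max: "Max (occurrences w u) \<in> occurrences w u"
    using assms finite_occurrences by (rule Max_in[rotated])
  show "Min (occurrences w u) \<in> occurrences w u"
    using assms finite_occurrences by (rule Min_in[rotated])
  show "Min (occurrences w u) \<le> Max (occurrences w u)"
    using max by (rule Min_le[OF finite_occurrences])
  show "Max (occurrences w u) + length w \<le> length u"
    using max unfolding occurrences_def by simp
qed

lemma occurrences_infix_iff:
  "W = P @ u @ Q \<Longrightarrow>
     t \<in> occurrences w u \<longleftrightarrow> t + length w \<le> length u \<and> length P + t \<in> occurrences w W"
  by (auto simp: occurrences_def)

lemma occurrences_append_left: "k \<in> occurrences w Y \<longleftrightarrow> length Z + k \<in> occurrences w (Z @ Y)"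
  unfolding occurrences_def by simp

definition block_start :: "('a \<Rightarrow> 'b list) \<Rightarrow> 'a list \<Rightarrow> nat \<Rightarrow> nat" where
  "block_start \<sigma> V j = length (morph_word \<sigma> (take j V))"

lemma block_start_0 [simp]: "block_start \<sigma> V 0 = 0"
  by (simp add: block_start_def)

lemma block_start_Cons_Suc [simp]: "block_start \<sigma> (a # V) (Suc j) = length (\<sigma> a) + block_start \<sigma> V j"
  by (simp add: block_start_def)

lemma block_start_length [simp]: "block_start \<sigma> V (length V) = length (morph_word \<sigma> V)"
  by (simp add: block_start_def)

lemma block_start_Suc: "j < length V \<Longrightarrow> block_start \<sigma> V (Suc j) = block_start \<sigma> V j + length (\<sigma> (V ! j))"
  by (simp add: block_start_def take_Suc_conv_app_nth)

lemma take_eq_take_append_drop_take: "j \<le> j' \<Longrightarrow> take j' V = take j V @ drop j (take j' V)"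
  by (metis append_take_drop_id min.absorb1 take_take)

lemma block_start_mono: "j \<le> j' \<Longrightarrow> block_start \<sigma> V j \<le> block_start \<sigma> V j'"
  unfolding block_start_def by (subst take_eq_take_append_drop_take[of j j' V]) simp_all

lemma block_start_strict_mono:
  assumes "return_morphism \<sigma> w" "j < j'" "j' \<le> length V"
  shows "block_start \<sigma> V j < block_start \<sigma> V j'"
proof -
  have "block_start \<sigma> V j < block_start \<sigma> V (Suc j)"
    using block_start_Suc[of j V \<sigma>] assms return_morphism_nonempty[OF assms(1), of "V ! j"] by simp
  also have "\<dots> \<le> block_start \<sigma> V j'" using assms by (intro block_start_mono) simp
  finally show ?thesis .
qed

lemma block_start_le_length: "block_start \<sigma> V j \<le> length (morph_word \<sigma> V)"
proof -
  have "morph_word \<sigma> V = morph_word \<sigma> (take j V) @ morph_word \<sigma> (drop j V)"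
    by (metis append_take_drop_id morph_word_append)
  then show ?thesis unfolding block_start_def by (metis le_add1 length_append)
qed

lemma drop_take_block_start:
  assumes "j \<le> j'"
  shows "drop (block_start \<sigma> V j) (take (block_start \<sigma> V j') (morph_word \<sigma> V @ w)) =
    morph_word \<sigma> (drop j (take j' V))"
proof -
  have "morph_word \<sigma> V = morph_word \<sigma> (take j' V) @ morph_word \<sigma> (drop j' V)"
    by (metis append_take_drop_id morph_word_append)
  then have "take (block_start \<sigma> V j') (morph_word \<sigma> V) = morph_word \<sigma> (take j' V)"
    by (simp add: block_start_def)
  also have "\<dots> = morph_word \<sigma> (take j V) @ morph_word \<sigma> (drop j (take j' V))"
    by (subst take_eq_take_append_drop_take[OF assms]) simp
  finally show ?thesis
    using block_start_le_length[of \<sigma> V j'] by (simp add: block_start_def)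
qed

lemma drop_block_start:
  assumes "return_morphism \<sigma> w" "j < length V"
  shows "\<exists>t. drop (block_start \<sigma> V j) (morph_word \<sigma> V @ w) = \<sigma> (V ! j) @ w @ t"
proof -
  obtain t where t: "morph_word \<sigma> (drop (Suc j) V) @ w = w @ t"
    using morph_word_return_prefix[OF assms(1)] by blast
  have "V = take j V @ V ! j # drop (Suc j) V" using assms(2) by (simp add: id_take_nth_drop)
  then have "morph_word \<sigma> V @ w =
      morph_word \<sigma> (take j V) @ \<sigma> (V ! j) @ morph_word \<sigma> (drop (Suc j) V) @ w"
    by (metis append.assoc morph_word_Cons morph_word_append)
  then show ?thesis using t by (simp add: block_start_def)
qed

lemma block_start_in_occurrences:
  assumes rm: "return_morphism \<sigma> w" and j: "j \<le> length V"
  shows "block_start \<sigma> V j \<in> occurrences w (morph_word \<sigma> V @ w)"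
proof -
  have "\<exists>t. drop (block_start \<sigma> V j) (morph_word \<sigma> V @ w) = w @ t"
  proof (cases "j < length V")
    case True
    obtain t where "drop (block_start \<sigma> V j) (morph_word \<sigma> V @ w) = \<sigma> (V ! j) @ w @ t"
      using drop_block_start[OF rm True] by blast
    moreover obtain t' where "\<sigma> (V ! j) @ w = w @ t'" using return_morphism_prefix[OF rm] by blast
    ultimately show ?thesis by (metis append.assoc)
  qed (use j in simp)
  then obtain t where "drop (block_start \<sigma> V j) (morph_word \<sigma> V @ w) = w @ t" ..
  then have "take (length w) (drop (block_start \<sigma> V j) (morph_word \<sigma> V @ w)) = w" by simp
  moreover have "block_start \<sigma> V j + length w \<le> length (morph_word \<sigma> V @ w)"
    using block_start_le_length[of \<sigma> V j] by simp
  ultimately show ?thesis unfolding occurrences_def by blast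
qed

lemma occurrence_is_block_start:
  assumes rm: "return_morphism \<sigma> w"
  shows "i \<in> occurrences w (morph_word \<sigma> V @ w) \<Longrightarrow> \<exists>j\<le>length V. i = block_start \<sigma> V j"
proof (induction V arbitrary: i)
  case Nil
  then show ?case by (auto simp: occurrences_def)
next
  case (Cons a V)
  obtain t where "morph_word \<sigma> V @ w = w @ t" using morph_word_return_prefix[OF rm] by blast
  then have W: "morph_word \<sigma> (a # V) @ w = \<sigma> a @ w @ t" by simp
  show ?case
  proof (cases "i < length (\<sigma> a)")
    case True
    have "take (length w) (drop i (\<sigma> a @ w @ t)) = w"
      using Cons.prems unfolding W by (simp add: occurrences_def)
    then have "take (length w) (drop i (\<sigma> a @ w)) = w" using True by simp
    then have "i \<in> occurrences w (\<sigma> a @ w)" using True by (simp add: occurrences_def)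
    then have "i = 0" using return_morphism_occurrences[OF rm, of a] True by auto
    then show ?thesis by (intro exI[of _ 0]) simp
  next
    case False
    then have "i - length (\<sigma> a) \<in> occurrences w (morph_word \<sigma> V @ w)"
      using Cons.prems occurrences_append_left[of "i - length (\<sigma> a)" w _ "\<sigma> a"] by simp
    then obtain j where "j \<le> length V" "i - length (\<sigma> a) = block_start \<sigma> V j"
      using Cons.IH by blast
    then show ?thesis using False by (intro exI[of _ "Suc j"]) simp
  qed
qed

lemma block_start_after:
  assumes "\<And>a. length (\<sigma> a) \<le> M" "1 \<le> M" "p \<le> length (morph_word \<sigma> V)"
  shows "\<exists>j\<le>length V. p \<le> block_start \<sigma> V j \<and> block_start \<sigma> V j < p + M"
  using assms(3)
proof (induction V arbitrary: p)
  case (Cons a V)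
  consider "p = 0" | "0 < p" "p \<le> length (\<sigma> a)" | "length (\<sigma> a) < p" by linarith
  then show ?case
  proof cases
    case 1
    then show ?thesis using assms(2) by (intro exI[of _ 0]) auto
  next
    case 2
    then show ?thesis using assms(1)[of a] by (intro exI[of _ 1]) auto
  next
    case 3
    have "p - length (\<sigma> a) \<le> length (morph_word \<sigma> V)" using Cons.prems by simp
    from Cons.IH[OF this] obtain j where "j \<le> length V"
        "p - length (\<sigma> a) \<le> block_start \<sigma> V j" "block_start \<sigma> V j < p - length (\<sigma> a) + M"
      by blast
    then show ?thesis using 3 by (intro exI[of _ "Suc j"]) auto
  qed
qed (use assms in auto)

lemma block_start_before:
  assumes "\<And>a. length (\<sigma> a) \<le> M" "1 \<le> M" "p \<le> length (morph_word \<sigma> V)"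
  shows "\<exists>j\<le>length V. block_start \<sigma> V j \<le> p \<and> p < block_start \<sigma> V j + M"
  using assms(3)
proof (induction V arbitrary: p)
  case (Cons a V)
  show ?case
  proof (cases "p < length (\<sigma> a)")
    case True
    then show ?thesis using assms(1)[of a] by (intro exI[of _ 0]) auto
  next
    case False
    have "p - length (\<sigma> a) \<le> length (morph_word \<sigma> V)" using Cons.prems by simp
    from Cons.IH[OF this] obtain j where "j \<le> length V"
        "block_start \<sigma> V j \<le> p - length (\<sigma> a)" "p - length (\<sigma> a) < block_start \<sigma> V j + M"
      by blast
    then show ?thesis using False by (intro exI[of _ "Suc j"]) auto
  qed
qed (use assms in auto)

lemma block_start_of_occurrence:
  "return_morphism \<sigma> w \<Longrightarrow> morph_word \<sigma> V @ w = P @ u @ Q \<Longrightarrow> t \<in> occurrences w u \<Longrightarrow>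
     \<exists>j\<le>length V. block_start \<sigma> V j = length P + t"
  using occurrences_infix_iff[of "morph_word \<sigma> V @ w" P u Q t w]
    occurrence_is_block_start[of \<sigma> w "length P + t" V] by metis

lemma occurrence_of_block_start:
  "return_morphism \<sigma> w \<Longrightarrow> morph_word \<sigma> V @ w = P @ u @ Q \<Longrightarrow> j \<le> length V \<Longrightarrow>
     length P \<le> block_start \<sigma> V j \<Longrightarrow> block_start \<sigma> V j + length w \<le> length P + length u \<Longrightarrow>
     block_start \<sigma> V j - length P \<in> occurrences w u"
  using occurrences_infix_iff[of "morph_word \<sigma> V @ w" P u Q "block_start \<sigma> V j - length P" w]
    block_start_in_occurrences[of \<sigma> w j V] by auto

section \<open>Desubstitution of long factors\<close>

definition morph_lang :: "(int \<Rightarrow> 'a) set \<Rightarrow> ('a \<Rightarrow> 'b list) \<Rightarrow> 'b list \<Rightarrow> 'b list set" where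
  "morph_lang X \<sigma> w = {u. \<exists>V\<in>lang X. \<exists>P Q. morph_word \<sigma> V @ w = P @ u @ Q}"

lemma morph_lang_extend_right:
  assumes rm: "return_morphism \<sigma> w" and z: "z \<in> morph_lang X \<sigma> w"
  shows "\<exists>d. z @ [d] \<in> morph_lang X \<sigma> w"
proof -
  obtain V P Q where V: "V \<in> lang X" and W: "morph_word \<sigma> V @ w = P @ z @ Q"
    using z unfolding morph_lang_def by blast
  show ?thesis
  proof (cases Q)
    case (Cons d Q')
    then show ?thesis using V W unfolding morph_lang_def by (intro exI[of _ d]) force
  next
    case Nil
    obtain a b where "a # V @ [b] \<in> lang X" using lang_extend_both_sides[OF V] by blast
    then have Vb: "V @ [b] \<in> lang X" using lang_suffix[of "[a]" "V @ [b]"] by simp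
    obtain t where t: "\<sigma> b @ w = w @ t" using return_morphism_prefix[OF rm] by blast
    have "t \<noteq> []" using t return_morphism_nonempty[OF rm, of b] by auto
    then obtain d t' where t': "t = d # t'" by (cases t) auto
    have "morph_word \<sigma> (V @ [b]) @ w = P @ (z @ [d]) @ t'"
      using W t t' Nil by simp
    then show ?thesis using Vb unfolding morph_lang_def by blast
  qed
qed

lemma morph_lang_extend_left:
  assumes rm: "return_morphism \<sigma> w" and z: "z \<in> morph_lang X \<sigma> w"
  shows "\<exists>c. c # z \<in> morph_lang X \<sigma> w"
proof -
  obtain V P Q where V: "V \<in> lang X" and W: "morph_word \<sigma> V @ w = P @ z @ Q"
    using z unfolding morph_lang_def by blast
  show ?thesis
  proof (cases "P = []")
    case False
    then have "morph_word \<sigma> V @ w = butlast P @ (last P # z) @ Q"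
      using W by (metis append.assoc append_Cons append_Nil append_butlast_last_id)
    then show ?thesis using V unfolding morph_lang_def by blast
  next
    case True
    obtain a b where "a # V @ [b] \<in> lang X" using lang_extend_both_sides[OF V] by blast
    then have aV: "a # V \<in> lang X" using lang_prefix[of "a # V" "[b]"] by simp
    have "morph_word \<sigma> (a # V) @ w = \<sigma> a @ z @ Q" using W True by simp
    also have "\<dots> = butlast (\<sigma> a) @ (last (\<sigma> a) # z) @ Q"
      using return_morphism_nonempty[OF rm, of a] by (metis append.assoc append_Cons append_Nil append_butlast_last_id)
    finally show ?thesis using aV unfolding morph_lang_def by blast
  qed
qed

lemma occurrences_bracket_blocks:
  assumes rm: "return_morphism \<sigma> w" and W: "morph_word \<sigma> V @ w = P @ u @ Q"
    and ne: "occurrences w u \<noteq> {}"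
  defines "i\<^sub>0 \<equiv> Min (occurrences w u)" and "i\<^sub>1 \<equiv> Max (occurrences w u)"
  obtains j j' where "j \<le> j'" "j' \<le> length V"
    "block_start \<sigma> V j = length P + i\<^sub>0" "block_start \<sigma> V j' = length P + i\<^sub>1"
    "morph_word \<sigma> (drop j (take j' V)) = drop i\<^sub>0 (take i\<^sub>1 u)"
proof -
  note occurrences_Min_Max[OF ne, folded i\<^sub>0_def i\<^sub>1_def]
  note i\<^sub>0 = this(1) and i\<^sub>1 = this(2) and i01 = this(3) and i1w = this(4)
  obtain j where j: "j \<le> length V" "block_start \<sigma> V j = length P + i\<^sub>0"
    using block_start_of_occurrence[OF rm W i\<^sub>0] by blast
  obtain j' where j': "j' \<le> length V" "block_start \<sigma> V j' = length P + i\<^sub>1"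
    using block_start_of_occurrence[OF rm W i\<^sub>1] by blast
  have jj: "j \<le> j'"
  proof (rule ccontr)
    assume "\<not> j \<le> j'"
    then have "block_start \<sigma> V j' < block_start \<sigma> V j"
      using block_start_strict_mono[OF rm, of j' j V] j by simp
    then show False using j j' i01 by simp
  qed
  have "morph_word \<sigma> (drop j (take j' V)) =
      drop (block_start \<sigma> V j) (take (block_start \<sigma> V j') (morph_word \<sigma> V @ w))"
    by (rule drop_take_block_start[OF jj, symmetric])
  also have "\<dots> = drop i\<^sub>0 (take i\<^sub>1 u)" using j(2) j'(2) i01 i1w unfolding W by simp
  finally show ?thesis using that jj j' j by blast
qed

lemma Cons_prefix_of_longer: "xs @ d # ys = zs @ ts \<Longrightarrow> length xs < length zs \<Longrightarrow> \<exists>ys'. zs = xs @ d # ys'"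
proof -
  assume e: "xs @ d # ys = zs @ ts" and l: "length xs < length zs"
  have "take (Suc (length xs)) zs = xs @ [d]"
    using arg_cong[OF e, of "take (Suc (length xs))"] l by simp
  then show ?thesis by (metis append.assoc append_Cons append_Nil append_take_drop_id)
qed

lemma block_before_first_occurrence:
  assumes rm: "return_morphism \<sigma> w" and W: "morph_word \<sigma> V @ w = P @ c # u @ Q"
    and ne: "occurrences w u \<noteq> {}"
    and j: "j \<le> length V" "block_start \<sigma> V j = Suc (length P) + Min (occurrences w u)"
  shows "1 \<le> j" and "\<exists>P'. \<sigma> (V ! (j - 1)) = P' @ c # take (Min (occurrences w u)) u"
proof -
  define i\<^sub>0 where "i\<^sub>0 = Min (occurrences w u)"
  have i0w: "i\<^sub>0 + length w \<le> length u"
    using occurrences_Min_Max[OF ne] unfolding i\<^sub>0_def by linarith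
  have W': "morph_word \<sigma> V @ w = (P @ [c]) @ u @ Q" using W by simp
  show j1: "1 \<le> j" using j(2) by (cases j) auto
  have lt: "block_start \<sigma> V (j - 1) < block_start \<sigma> V j"
    using block_start_strict_mono[OF rm, of "j - 1" j V] j j1 by simp
  have start: "block_start \<sigma> V (j - 1) \<le> length P"
  proof (rule ccontr)
    assume late: "\<not> ?thesis"
    then have "block_start \<sigma> V (j - 1) - length (P @ [c]) \<in> occurrences w u"
      using lt j i0w unfolding i\<^sub>0_def by (intro occurrence_of_block_start[OF rm W']) auto
    then have "i\<^sub>0 \<le> block_start \<sigma> V (j - 1) - length (P @ [c])"
      unfolding i\<^sub>0_def by (rule Min_le[OF finite_occurrences])
    then show False using lt j late unfolding i\<^sub>0_def by simp
  qed
  have "take (block_start \<sigma> V j) (morph_word \<sigma> V @ w) = P @ c # take i\<^sub>0 u"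
    using j(2) i0w unfolding W i\<^sub>0_def by simp
  moreover have "drop (j - 1) (take j V) = [V ! (j - 1)]"
    using j j1 take_Suc_conv_app_nth[of "j - 1" V] by simp
  then have "\<sigma> (V ! (j - 1)) =
      drop (block_start \<sigma> V (j - 1)) (take (block_start \<sigma> V j) (morph_word \<sigma> V @ w))"
    using drop_take_block_start[of "j - 1" j \<sigma> V w] by simp
  ultimately have "\<sigma> (V ! (j - 1)) = drop (block_start \<sigma> V (j - 1)) P @ c # take i\<^sub>0 u"
    using start by simp
  then show "\<exists>P'. \<sigma> (V ! (j - 1)) = P' @ c # take (Min (occurrences w u)) u"
    unfolding i\<^sub>0_def by blast
qed

lemma block_at_last_occurrence:
  assumes rm: "return_morphism \<sigma> w" and W: "morph_word \<sigma> V @ w = P @ u @ d # Q"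
    and ne: "occurrences w u \<noteq> {}"
    and j': "j' \<le> length V" "block_start \<sigma> V j' = length P + Max (occurrences w u)"
  shows "j' < length V" and "\<exists>Q'. \<sigma> (V ! j') @ w = drop (Max (occurrences w u)) u @ d # Q'"
proof -
  define i\<^sub>1 where "i\<^sub>1 = Max (occurrences w u)"
  have i1w: "i\<^sub>1 + length w \<le> length u" using occurrences_Min_Max(4)[OF ne] unfolding i\<^sub>1_def .
  have len: "length (morph_word \<sigma> V) + length w = length P + length u + Suc (length Q)"
    using arg_cong[OF W, of length] by simp
  show j'l: "j' < length V"
  proof (rule ccontr)
    assume "\<not> ?thesis"
    then have "block_start \<sigma> V j' = length (morph_word \<sigma> V)" using j'(1) by simp
    then show False using j'(2) len i1w unfolding i\<^sub>1_def by simp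
  qed
  have lt: "block_start \<sigma> V j' < block_start \<sigma> V (Suc j')"
    using block_start_strict_mono[OF rm, of j' "Suc j'" V] j'l by simp
  have beyond: "length P + length u < block_start \<sigma> V (Suc j') + length w"
  proof (rule ccontr)
    assume "\<not> ?thesis"
    then have "block_start \<sigma> V (Suc j') - length P \<in> occurrences w u"
      using lt j' j'l by (intro occurrence_of_block_start[OF rm W]) auto
    then have "block_start \<sigma> V (Suc j') - length P \<le> i\<^sub>1"
      unfolding i\<^sub>1_def by (rule Max_ge[OF finite_occurrences])
    then show False using lt j'(2) unfolding i\<^sub>1_def by simp
  qed
  obtain t where "drop (block_start \<sigma> V j') (morph_word \<sigma> V @ w) = \<sigma> (V ! j') @ w @ t"
    using drop_block_start[OF rm j'l] by blast
  moreover have "drop (block_start \<sigma> V j') (morph_word \<sigma> V @ w) = drop i\<^sub>1 u @ d # Q"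
    using j'(2) i1w unfolding W i\<^sub>1_def by simp
  ultimately have "drop i\<^sub>1 u @ d # Q = (\<sigma> (V ! j') @ w) @ t" by simp
  moreover have "length (drop i\<^sub>1 u) < length (\<sigma> (V ! j') @ w)"
    using beyond block_start_Suc[OF j'l, of \<sigma>] j'(2) i1w unfolding i\<^sub>1_def by simp
  ultimately show "\<exists>Q'. \<sigma> (V ! j') @ w = drop (Max (occurrences w u)) u @ d # Q'"
    unfolding i\<^sub>1_def by (rule Cons_prefix_of_longer)
qed

lemma extension_desubstitution:
  assumes rm: "return_morphism \<sigma> w" and W: "morph_word \<sigma> V @ w = P @ c # u @ d # Q"
    and ne: "occurrences w u \<noteq> {}"
  defines "i\<^sub>0 \<equiv> Min (occurrences w u)" and "i\<^sub>1 \<equiv> Max (occurrences w u)"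
  obtains j j' where "1 \<le> j" "j \<le> j'" "j' < length V"
    "\<exists>P'. \<sigma> (V ! (j - 1)) = P' @ c # take i\<^sub>0 u" "\<exists>Q'. \<sigma> (V ! j') @ w = drop i\<^sub>1 u @ d # Q'"
    "morph_word \<sigma> (drop j (take j' V)) = drop i\<^sub>0 (take i\<^sub>1 u)"
proof -
  have W': "morph_word \<sigma> V @ w = (P @ [c]) @ u @ (d # Q)" using W by simp
  obtain j j' where jj: "j \<le> j'" "j' \<le> length V"
    and j: "block_start \<sigma> V j = length (P @ [c]) + i\<^sub>0"
    and j': "block_start \<sigma> V j' = length (P @ [c]) + i\<^sub>1"
    and mid: "morph_word \<sigma> (drop j (take j' V)) = drop i\<^sub>0 (take i\<^sub>1 u)"
    using occurrences_bracket_blocks[OF rm W' ne] unfolding i\<^sub>0_def i\<^sub>1_def by blast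
  have "1 \<le> j" "\<exists>P'. \<sigma> (V ! (j - 1)) = P' @ c # take i\<^sub>0 u"
    using block_before_first_occurrence[OF rm W ne, of j] jj j unfolding i\<^sub>0_def by simp_all
  moreover have "j' < length V" "\<exists>Q'. \<sigma> (V ! j') @ w = drop i\<^sub>1 u @ d # Q'"
    using block_at_last_occurrence[of \<sigma> w V "P @ [c]" u d Q, OF rm _ ne] W jj j'
    unfolding i\<^sub>1_def by simp_all
  ultimately show ?thesis using that jj mid by blast
qed

text \<open>Every M consecutive positions of an image contain a block start, and w occurs at every
  block start.\<close>
lemma occurrences_near_ends:
  assumes rm: "return_morphism \<sigma> w" and M: "\<And>a. length (\<sigma> a) \<le> M" "1 \<le> M"
    and W: "morph_word \<sigma> V @ w = P @ u @ Q" and len: "length w + M \<le> length u + 1"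
  shows "occurrences w u \<noteq> {}" and "Min (occurrences w u) < M"
    and "length u < Max (occurrences w u) + M + length w"
proof -
  have lenW: "length (morph_word \<sigma> V) + length w = length P + length u + length Q"
    using arg_cong[OF W, of length] by simp
  have start: "length P \<le> length (morph_word \<sigma> V)" using lenW len M(2) by linarith
  obtain j where j: "j \<le> length V" "length P \<le> block_start \<sigma> V j"
      "block_start \<sigma> V j < length P + M"
    using block_start_after[OF M start] by blast
  have first: "block_start \<sigma> V j - length P \<in> occurrences w u"
    using j len by (intro occurrence_of_block_start[OF rm W]) linarith+
  then show "occurrences w u \<noteq> {}" by blast
  show "Min (occurrences w u) < M"
    using Min_le[OF finite_occurrences first] j by linarith
  have stop: "length P + length u - length w \<le> length (morph_word \<sigma> V)" using lenW by linarith
  obtain j' where j': "j' \<le> length V" "block_start \<sigma> V j' \<le> length P + length u - length w"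
      "length P + length u - length w < block_start \<sigma> V j' + M"
    using block_start_before[OF M stop] by blast
  have "block_start \<sigma> V j' - length P \<in> occurrences w u"
    using j' len by (intro occurrence_of_block_start[OF rm W]) linarith+
  then have "block_start \<sigma> V j' - length P \<le> Max (occurrences w u)"
    by (rule Max_ge[OF finite_occurrences])
  then show "length u < Max (occurrences w u) + M + length w"
    using j' len by linarith
qed

lemma long_factor_preimage:
  assumes rm: "return_morphism \<sigma> w" and M: "\<And>a. length (\<sigma> a) \<le> M" "1 \<le> M"
    and V: "V \<in> lang X" and W: "morph_word \<sigma> V @ w = P @ u @ Q"
    and len: "M * (N + 1) + length w \<le> length u + 1"
  shows "occurrences w u \<noteq> {}"
    and "\<exists>v\<in>lang X. N \<le> length v \<and>
           morph_word \<sigma> v = drop (Min (occurrences w u)) (take (Max (occurrences w u)) u)"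
proof -
  have len': "length w + M \<le> length u + 1" using len by (simp add: algebra_simps)
  note near = occurrences_near_ends[OF rm M W len']
  show ne: "occurrences w u \<noteq> {}" by (rule near(1))
  define i\<^sub>0 where "i\<^sub>0 = Min (occurrences w u)"
  define i\<^sub>1 where "i\<^sub>1 = Max (occurrences w u)"
  obtain j j' where jj: "j \<le> j'" "j' \<le> length V"
    and mid: "morph_word \<sigma> (drop j (take j' V)) = drop i\<^sub>0 (take i\<^sub>1 u)"
    using occurrences_bracket_blocks[OF rm W ne] unfolding i\<^sub>0_def i\<^sub>1_def by blast
  have i1w: "i\<^sub>1 + length w \<le> length u" using occurrences_Min_Max(4)[OF ne] unfolding i\<^sub>1_def .
  have "i\<^sub>1 - i\<^sub>0 \<le> M * (j' - j)"
    using length_morph_word_le[of \<sigma> M "drop j (take j' V)"] M(1) mid jj i1w by simp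
  then have "M * N < M * Suc (j' - j)"
    using near(2,3) len unfolding i\<^sub>0_def i\<^sub>1_def by (simp add: algebra_simps)
  then have "N < Suc (j' - j)" by (rule mult_less_cancel1[THEN iffD1, THEN conjunct2])
  then have "N \<le> j' - j" by simp
  then show "\<exists>v\<in>lang X. N \<le> length v \<and> morph_word \<sigma> v = drop i\<^sub>0 (take i\<^sub>1 u)"
    using mid jj lang_drop_take[OF V] by (intro bexI[of _ "drop j (take j' V)"]) auto
qed

lemma double_star_image:
  assumes ds: "double_star B" and ne: "R \<noteq> {}"
    and R: "\<And>c d. (c, d) \<in> R \<longleftrightarrow> (\<exists>a b. (a, b) \<in> B \<and> F a c \<and> G b d)"
    and F: "\<And>a c c'. F a c \<Longrightarrow> F a c' \<Longrightarrow> c = c'"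
    and G: "\<And>b d d'. G b d \<Longrightarrow> G b d' \<Longrightarrow> d = d'"
  shows "double_star R"
proof -
  obtain \<alpha> \<beta> where \<alpha>\<beta>: "(\<alpha>, \<beta>) \<in> B" and star: "\<And>a b. (a, b) \<in> B \<Longrightarrow> a = \<alpha> \<or> b = \<beta>"
    using ds unfolding double_star_def by blast
  obtain c\<^sub>1 d\<^sub>1 a\<^sub>1 b\<^sub>1 where cd\<^sub>1: "(c\<^sub>1, d\<^sub>1) \<in> R" "(a\<^sub>1, b\<^sub>1) \<in> B" "F a\<^sub>1 c\<^sub>1" "G b\<^sub>1 d\<^sub>1"
    using ne R by fastforce
  consider (both) c\<^sub>\<alpha> d\<^sub>\<beta> where "F \<alpha> c\<^sub>\<alpha>" "G \<beta> d\<^sub>\<beta>"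
    | (no_left) "\<And>c. \<not> F \<alpha> c"
    | (no_right) c\<^sub>\<alpha> where "F \<alpha> c\<^sub>\<alpha>" "\<And>d. \<not> G \<beta> d"
    by blast
  then show ?thesis
  proof cases
    case both
    have "c = c\<^sub>\<alpha> \<or> d = d\<^sub>\<beta>" if "(c, d) \<in> R" for c d
      using that R star F G both by metis
    then show ?thesis using R \<alpha>\<beta> both unfolding double_star_def by blast
  next
    case no_left
    have "d = d\<^sub>1" if "(c, d) \<in> R" for c d
      using that cd\<^sub>1 R star G no_left by metis
    then show ?thesis using cd\<^sub>1(1) unfolding double_star_def by blast
  next
    case no_right
    have "c = c\<^sub>1" if "(c, d) \<in> R" for c d
      using that cd\<^sub>1 R star F no_right by metis
    then show ?thesis using cd\<^sub>1(1) unfolding double_star_def by blast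
  qed
qed

lemma drop_take_extend_both:
  assumes "1 \<le> j" "j \<le> j'" "j' < length V"
  shows "drop (j - 1) (take (Suc j') V) = V ! (j - 1) # drop j (take j' V) @ [V ! j']"
proof -
  have "take (Suc j') V = take j' V @ [V ! j']" using assms by (simp add: take_Suc_conv_app_nth)
  moreover have "drop (j - 1) (take j' V) = take j' V ! (j - 1) # drop j (take j' V)"
    using assms Cons_nth_drop_Suc[of "j - 1" "take j' V"] by simp
  ultimately show ?thesis using assms by simp
qed

lemma morph_lang_two_sided_extension_iff:
  fixes \<sigma> :: "'a \<Rightarrow> 'b list" and w u :: "'b list"
  defines "i\<^sub>0 \<equiv> Min (occurrences w u)" and "i\<^sub>1 \<equiv> Max (occurrences w u)"
  assumes rm: "return_morphism \<sigma> w" and ne: "occurrences w u \<noteq> {}"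
    and v: "morph_word \<sigma> v = drop i\<^sub>0 (take i\<^sub>1 u)"
  shows "c # u @ [d] \<in> morph_lang X \<sigma> w \<longleftrightarrow>
    (\<exists>a b. a # v @ [b] \<in> lang X \<and> (\<exists>P'. \<sigma> a = P' @ c # take i\<^sub>0 u) \<and>
       (\<exists>Q'. \<sigma> b @ w = drop i\<^sub>1 u @ d # Q'))"
proof
  assume "c # u @ [d] \<in> morph_lang X \<sigma> w"
  then obtain V P Q where V: "V \<in> lang X" and W: "morph_word \<sigma> V @ w = P @ c # u @ d # Q"
    unfolding morph_lang_def by auto
  obtain j j' where jj: "1 \<le> j" "j \<le> j'" "j' < length V"
    and ends: "\<exists>P'. \<sigma> (V ! (j - 1)) = P' @ c # take i\<^sub>0 u" "\<exists>Q'. \<sigma> (V ! j') @ w = drop i\<^sub>1 u @ d # Q'"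
    and mid: "morph_word \<sigma> (drop j (take j' V)) = drop i\<^sub>0 (take i\<^sub>1 u)"
    using extension_desubstitution[OF rm W ne] unfolding i\<^sub>0_def i\<^sub>1_def by blast
  have "drop j (take j' V) = v"
    using mid v rm unfolding return_morphism_def by (metis injD)
  then have "V ! (j - 1) # v @ [V ! j'] \<in> lang X"
    using lang_drop_take[OF V, of "j - 1" "Suc j'"] drop_take_extend_both[OF jj] by simp
  then show "\<exists>a b. a # v @ [b] \<in> lang X \<and> (\<exists>P'. \<sigma> a = P' @ c # take i\<^sub>0 u) \<and>
      (\<exists>Q'. \<sigma> b @ w = drop i\<^sub>1 u @ d # Q')"
    using ends by blast
next
  assume "\<exists>a b. a # v @ [b] \<in> lang X \<and> (\<exists>P'. \<sigma> a = P' @ c # take i\<^sub>0 u) \<and>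
      (\<exists>Q'. \<sigma> b @ w = drop i\<^sub>1 u @ d # Q')"
  then obtain a b P' Q' where ab: "a # v @ [b] \<in> lang X" and
    a: "\<sigma> a = P' @ c # take i\<^sub>0 u" and b: "\<sigma> b @ w = drop i\<^sub>1 u @ d # Q'"
    by blast
  have "i\<^sub>0 \<le> i\<^sub>1" "i\<^sub>1 \<le> length u"
    using occurrences_Min_Max[OF ne] unfolding i\<^sub>0_def i\<^sub>1_def by simp_all
  then have "u = take i\<^sub>0 u @ morph_word \<sigma> v @ drop i\<^sub>1 u"
    unfolding v by (metis append.assoc append_take_drop_id drop_take min.absorb1 take_take)
  then have "morph_word \<sigma> (a # v @ [b]) @ w = P' @ (c # u @ [d]) @ Q'"
    using a b by (metis append.assoc append_Cons append_Nil morph_word_Cons morph_word_append morph_word_Nil)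
  then show "c # u @ [d] \<in> morph_lang X \<sigma> w"
    using ab unfolding morph_lang_def by blast
qed

lemma append_Cons_same_suffix: "P @ c # s = P' @ c' # s \<Longrightarrow> c = c'"
proof -
  assume eq: "P @ c # s = P' @ c' # s"
  then have "length P = length P'" by (metis add_right_cancel length_Cons length_append)
  then show ?thesis using eq by simp
qed

lemma dendric_long_morph_factor:
  assumes rm: "return_morphism \<sigma> w" and M: "\<And>a. length (\<sigma> a) \<le> M" "1 \<le> M"
    and stars: "\<And>v. v \<in> lang X \<Longrightarrow> N \<le> length v \<Longrightarrow> double_star (ext_B X v)"
    and LY: "lang Y = morph_lang X \<sigma> w"
    and u: "u \<in> lang Y" and len: "M * (N + 1) + length w \<le> length u + 1"
  shows "dendric Y u"
proof -
  define i\<^sub>0 where "i\<^sub>0 = Min (occurrences w u)"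
  define i\<^sub>1 where "i\<^sub>1 = Max (occurrences w u)"
  obtain V P Q where V: "V \<in> lang X" and W: "morph_word \<sigma> V @ w = P @ u @ Q"
    using u LY unfolding morph_lang_def by blast
  note long = long_factor_preimage[OF rm M V W len]
  obtain v where v: "v \<in> lang X" "N \<le> length v" and mid: "morph_word \<sigma> v = drop i\<^sub>0 (take i\<^sub>1 u)"
    using long(2) unfolding i\<^sub>0_def i\<^sub>1_def by blast
  have uY: "u \<in> morph_lang X \<sigma> w" using u LY by simp
  obtain c where "c # u \<in> morph_lang X \<sigma> w" using morph_lang_extend_left[OF rm uY] by blast
  then obtain d where "(c # u) @ [d] \<in> morph_lang X \<sigma> w" using morph_lang_extend_right[OF rm] by blast
  then have ne: "ext_B Y u \<noteq> {}" using LY unfolding ext_B_def by auto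
  have "double_star (ext_B Y u)"
  proof (rule double_star_image[OF stars[OF v] ne])
    show "(c, d) \<in> ext_B Y u \<longleftrightarrow> (\<exists>a b. (a, b) \<in> ext_B X v \<and>
        (\<exists>P'. \<sigma> a = P' @ c # take i\<^sub>0 u) \<and> (\<exists>Q'. \<sigma> b @ w = drop i\<^sub>1 u @ d # Q'))" for c d
      using morph_lang_two_sided_extension_iff[OF rm long(1) mid[unfolded i\<^sub>0_def i\<^sub>1_def]] LY
      unfolding ext_B_def i\<^sub>0_def i\<^sub>1_def by simp
    show "c = c'" if "\<exists>P'. \<sigma> a = P' @ c # take i\<^sub>0 u" "\<exists>P'. \<sigma> a = P' @ c' # take i\<^sub>0 u" for a c c'
      using that append_Cons_same_suffix by metis
    show "d = d'" if "\<exists>Q'. \<sigma> b @ w = drop i\<^sub>1 u @ d # Q'" "\<exists>Q'. \<sigma> b @ w = drop i\<^sub>1 u @ d' # Q'"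
      for b d d'
      using that by auto
  qed
  then show ?thesis
  proof (rule dendric_if_double_star)
    show "\<exists>b. (a, b) \<in> ext_B Y u" if "a \<in> ext_L Y u" for a
      using that morph_lang_extend_right[OF rm, of "a # u"] LY unfolding ext_L_def ext_B_def by auto
    show "\<exists>a. (a, b) \<in> ext_B Y u" if "b \<in> ext_R Y u" for b
      using that morph_lang_extend_left[OF rm, of "u @ [b]"] LY unfolding ext_R_def ext_B_def by auto
  qed
qed

section \<open>The language of the image shift\<close>

lemma block_pos_0 [simp]: "block_pos \<sigma> x 0 = 0"
  by (simp add: block_pos_def)

lemma block_pos_add_one: "block_pos \<sigma> x (i + 1) = block_pos \<sigma> x i + int (length (\<sigma> (x i)))"
proof (cases "i \<ge> 0")
  case True
  then have "{0..<i + 1} = insert i {0..<i}" by auto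
  then show ?thesis using True unfolding block_pos_def by simp
next
  case False
  then consider "i = -1" | "i < -1" by linarith
  then show ?thesis
  proof cases
    case 1
    then have "{i..<0} = {i}" by auto
    then show ?thesis using 1 unfolding block_pos_def by simp
  next
    case 2
    then have "{i..<0} = insert i {i + 1..<0}" by auto
    then show ?thesis using 2 unfolding block_pos_def by simp
  qed
qed

lemma block_pos_add:
  "block_pos \<sigma> x (i + int m) =
     block_pos \<sigma> x i + int (length (morph_word \<sigma> (map (\<lambda>t. x (i + int t)) [0..<m])))"
proof (induction m)
  case (Suc m)
  have "block_pos \<sigma> x (i + int (Suc m)) = block_pos \<sigma> x (i + int m + 1)" by (simp add: algebra_simps)
  also have "\<dots> = block_pos \<sigma> x (i + int m) + int (length (\<sigma> (x (i + int m))))"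
    by (rule block_pos_add_one)
  finally show ?case using Suc by simp
qed simp

lemma block_pos_add_ge: "return_morphism \<sigma> w \<Longrightarrow> block_pos \<sigma> x i + int m \<le> block_pos \<sigma> x (i + int m)"
  using block_pos_add[of \<sigma> x i m] length_morph_word_ge[of \<sigma> w "map (\<lambda>t. x (i + int t)) [0..<m]"] by simp

lemma block_pos_mono: "i \<le> i' \<Longrightarrow> block_pos \<sigma> x i \<le> block_pos \<sigma> x i'"
  using block_pos_add[of \<sigma> x i "nat (i' - i)"] by simp

lemma block_pos_strict_mono: "return_morphism \<sigma> w \<Longrightarrow> block_pos \<sigma> x i < block_pos \<sigma> x (i + 1)"
  using block_pos_add_one[of \<sigma> x i] return_morphism_nonempty[of \<sigma> w "x i"] by simp

lemma block_pos_cover: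
  assumes rm: "return_morphism \<sigma> w"
  shows "\<exists>i. block_pos \<sigma> x i \<le> n \<and> n < block_pos \<sigma> x (i + 1)"
proof -
  define i\<^sub>0 where "i\<^sub>0 = - int (nat \<bar>n\<bar>)"
  have "block_pos \<sigma> x i\<^sub>0 + int (nat \<bar>n\<bar>) \<le> block_pos \<sigma> x (i\<^sub>0 + int (nat \<bar>n\<bar>))"
    by (rule block_pos_add_ge[OF rm])
  then have low: "block_pos \<sigma> x i\<^sub>0 \<le> n" unfolding i\<^sub>0_def by simp
  have "\<exists>i. block_pos \<sigma> x i \<le> block_pos \<sigma> x i\<^sub>0 + int m \<and>
      block_pos \<sigma> x i\<^sub>0 + int m < block_pos \<sigma> x (i + 1)" for m
  proof (induction m)
    case 0
    then show ?case using block_pos_strict_mono[OF rm, of x i\<^sub>0] by (intro exI[of _ i\<^sub>0]) simp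
  next
    case (Suc m)
    then obtain i where i: "block_pos \<sigma> x i \<le> block_pos \<sigma> x i\<^sub>0 + int m"
      "block_pos \<sigma> x i\<^sub>0 + int m < block_pos \<sigma> x (i + 1)" by blast
    show ?case
    proof (cases "block_pos \<sigma> x i\<^sub>0 + int (Suc m) < block_pos \<sigma> x (i + 1)")
      case True
      then show ?thesis using i by (intro exI[of _ i]) simp
    next
      case False
      then show ?thesis using i block_pos_strict_mono[OF rm, of x "i + 1"] by (intro exI[of _ "i + 1"]) simp
    qed
  qed
  from this[of "nat (n - block_pos \<sigma> x i\<^sub>0)"] show ?thesis using low by simp
qed

lemma block_pos_cover_unique:
  assumes "block_pos \<sigma> x i \<le> n" "n < block_pos \<sigma> x (i + 1)"
    and "block_pos \<sigma> x i' \<le> n" "n < block_pos \<sigma> x (i' + 1)"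
  shows "i = i'"
proof (rule ccontr)
  assume "i \<noteq> i'"
  then consider "i + 1 \<le> i'" | "i' + 1 \<le> i" by linarith
  then show False
    by cases (use assms block_pos_mono[of "i + 1" i' \<sigma> x] block_pos_mono[of "i' + 1" i \<sigma> x] in simp_all)
qed

lemma morph_point_window:
  assumes y: "\<And>i j. j < length (\<sigma> (x i)) \<Longrightarrow> y (block_pos \<sigma> x i + int j - k) = \<sigma> (x i) ! j"
    and t: "t < length (morph_word \<sigma> (map (\<lambda>t. x (i + int t)) [0..<m]))"
  shows "y (block_pos \<sigma> x i - k + int t) = morph_word \<sigma> (map (\<lambda>t. x (i + int t)) [0..<m]) ! t"
  using t
proof (induction m arbitrary: t)
  case (Suc m)
  define A where "A = morph_word \<sigma> (map (\<lambda>t. x (i + int t)) [0..<m])"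
  have eq: "morph_word \<sigma> (map (\<lambda>t. x (i + int t)) [0..<Suc m]) = A @ \<sigma> (x (i + int m))"
    unfolding A_def by simp
  show ?case
  proof (cases "t < length A")
    case True
    then show ?thesis using Suc.IH[of t] unfolding eq A_def by (simp add: nth_append)
  next
    case False
    define t' where "t' = t - length A"
    have t': "t' < length (\<sigma> (x (i + int m)))" using Suc.prems False unfolding eq t'_def by simp
    have "block_pos \<sigma> x (i + int m) = block_pos \<sigma> x i + int (length A)"
      unfolding A_def by (rule block_pos_add)
    then have "block_pos \<sigma> x i - k + int t = block_pos \<sigma> x (i + int m) + int t' - k"
      using False unfolding t'_def by simp
    then have "y (block_pos \<sigma> x i - k + int t) = \<sigma> (x (i + int m)) ! t'"
      using y[OF t'] by (simp only:)
    then show ?thesis using False unfolding eq t'_def by (simp add: nth_append)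
  qed
qed simp

lemma lang_morph_shift_subset:
  assumes rm: "return_morphism \<sigma> w" and u: "u \<in> lang (morph_shift \<sigma> X)"
  shows "u \<in> morph_lang X \<sigma> w"
proof -
  obtain y p where y: "y \<in> morph_shift \<sigma> X" and up: "u = map (\<lambda>t. y (p + int t)) [0..<length u]"
    using u unfolding lang_def by blast
  obtain x k where x: "x \<in> X"
    and image: "\<And>i j. j < length (\<sigma> (x i)) \<Longrightarrow> y (block_pos \<sigma> x i + int j - k) = \<sigma> (x i) ! j"
    using y unfolding morph_shift_def by blast
  obtain i where i: "block_pos \<sigma> x i \<le> p + k" using block_pos_cover[OF rm, of x "p + k"] by blast
  define off where "off = nat (p + k - block_pos \<sigma> x i)"
  define V where "V = map (\<lambda>t. x (i + int t)) [0..<off + length u]"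
  have V: "V \<in> lang X" unfolding lang_def V_def using x by auto
  have lenV: "off + length u \<le> length (morph_word \<sigma> V)"
    using length_morph_word_ge[OF rm, of V] unfolding V_def by simp
  have "u = take (length u) (drop off (morph_word \<sigma> V))"
  proof (rule nth_equalityI)
    fix t assume t: "t < length u"
    have "u ! t = y (block_pos \<sigma> x i - k + int (off + t))"
      using arg_cong[OF up, of "\<lambda>l. l ! t"] t i unfolding off_def by simp
    also have "\<dots> = morph_word \<sigma> V ! (off + t)"
      using morph_point_window[OF image, where i = i and m = "off + length u" and t = "off + t"] lenV t
      unfolding V_def by simp
    finally show "u ! t = take (length u) (drop off (morph_word \<sigma> V)) ! t" using t lenV by simp
  qed (use lenV in simp)
  then have "morph_word \<sigma> V @ w = take off (morph_word \<sigma> V) @ u @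
      (drop (length u) (drop off (morph_word \<sigma> V)) @ w)"
    by (metis append.assoc append_take_drop_id)
  then show ?thesis using V unfolding morph_lang_def by blast
qed

lemma morph_point_exists:
  assumes rm: "return_morphism \<sigma> w"
  obtains y where "\<And>j t. t < length (\<sigma> (x j)) \<Longrightarrow> y (block_pos \<sigma> x j + int t) = \<sigma> (x j) ! t"
proof -
  define blk where "blk n = (SOME j. block_pos \<sigma> x j \<le> n \<and> n < block_pos \<sigma> x (j + 1))" for n
  have blk: "block_pos \<sigma> x (blk n) \<le> n \<and> n < block_pos \<sigma> x (blk n + 1)" for n
    unfolding blk_def using someI_ex[OF block_pos_cover[OF rm, of x n]] by simp
  define y where "y n = \<sigma> (x (blk n)) ! nat (n - block_pos \<sigma> x (blk n))" for n
  have "y (block_pos \<sigma> x j + int t) = \<sigma> (x j) ! t" if t: "t < length (\<sigma> (x j))" for j t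
  proof -
    have "block_pos \<sigma> x j + int t < block_pos \<sigma> x (j + 1)"
      using t block_pos_add_one[of \<sigma> x j] by simp
    then have "blk (block_pos \<sigma> x j + int t) = j"
      using blk[of "block_pos \<sigma> x j + int t"]
        block_pos_cover_unique[of \<sigma> x "blk (block_pos \<sigma> x j + int t)" "block_pos \<sigma> x j + int t" j]
      by simp
    then show ?thesis unfolding y_def by simp
  qed
  then show ?thesis using that by blast
qed

lemma morph_point_return_word:
  assumes rm: "return_morphism \<sigma> w"
    and y: "\<And>j t. t < length (\<sigma> (x j)) \<Longrightarrow> y (block_pos \<sigma> x j + int t) = \<sigma> (x j) ! t"
  shows "t < length w \<Longrightarrow> y (block_pos \<sigma> x j + int t) = w ! t"
proof (induction t arbitrary: j rule: less_induct)
  case (less t)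
  obtain s where s: "\<sigma> (x j) @ w = w @ s" using return_morphism_prefix[OF rm] by blast
  have wt: "(\<sigma> (x j) @ w) ! t = w ! t" using s less.prems by (simp add: nth_append)
  show ?case
  proof (cases "t < length (\<sigma> (x j))")
    case True
    then show ?thesis using y[OF True] wt by (simp add: nth_append)
  next
    case False
    define t' where "t' = t - length (\<sigma> (x j))"
    have "block_pos \<sigma> x j + int t = block_pos \<sigma> x (j + 1) + int t'"
      using False block_pos_add_one[of \<sigma> x j] unfolding t'_def by simp
    moreover have "0 < length (\<sigma> (x j))" using return_morphism_nonempty[OF rm, of "x j"] by simp
    then have "t' < t" "t' < length w" using False less.prems unfolding t'_def by linarith+
    ultimately have "y (block_pos \<sigma> x j + int t) = w ! t'" using less.IH by presburger
    also have "\<dots> = (\<sigma> (x j) @ w) ! t" using False unfolding t'_def by (simp add: nth_append)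
    finally show ?thesis using wt by simp
  qed
qed

lemma morph_lang_subset_lang_morph_shift:
  assumes sh: "shift_space X" and rm: "return_morphism \<sigma> w" and u: "u \<in> morph_lang X \<sigma> w"
  shows "u \<in> lang (morph_shift \<sigma> X)"
proof -
  obtain V P Q where V: "V \<in> lang X" and W: "morph_word \<sigma> V @ w = P @ u @ Q"
    using u unfolding morph_lang_def by blast
  obtain x i where x: "x \<in> X" and Vx: "V = map (\<lambda>k. x (i + int k)) [0..<length V]"
    using V unfolding lang_def by blast
  define x' where "x' = (\<lambda>n. x (n + i))"
  have x': "x' \<in> X" unfolding x'_def by (rule shift_space_translate[OF sh x])
  have V': "V = map (\<lambda>t. x' (0 + int t)) [0..<length V]"
    using Vx unfolding x'_def by (simp add: add.commute)
  obtain y where y: "\<And>j t. t < length (\<sigma> (x' j)) \<Longrightarrow> y (block_pos \<sigma> x' j + int t) = \<sigma> (x' j) ! t"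
    using morph_point_exists[OF rm] by blast
  have "y \<in> morph_shift \<sigma> X"
    unfolding morph_shift_def using x' return_morphism_nonempty[OF rm, of "x' 0"] y by fastforce
  moreover have image: "y (int t) = (morph_word \<sigma> V @ w) ! t"
    if t: "t < length (morph_word \<sigma> V @ w)" for t
  proof (cases "t < length (morph_word \<sigma> V)")
    case True
    then show ?thesis
      using morph_point_window[of \<sigma> x' y 0 t 0 "length V"] y V' by (simp add: nth_append)
  next
    case False
    have "block_pos \<sigma> x' (int (length V)) = int (length (morph_word \<sigma> V))"
      using block_pos_add[of \<sigma> x' 0 "length V"] V' by simp
    then have "y (int t) = y (block_pos \<sigma> x' (int (length V)) + int (t - length (morph_word \<sigma> V)))"
      using False by simp
    also have "\<dots> = w ! (t - length (morph_word \<sigma> V))"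
      by (rule morph_point_return_word[OF rm y]) (use t False in auto)
    finally show ?thesis using False by (simp add: nth_append)
  qed
  have "u = map (\<lambda>t. y (int (length P) + int t)) [0..<length u]"
  proof (rule nth_equalityI)
    fix t assume "t < length u"
    then show "u ! t = map (\<lambda>t. y (int (length P) + int t)) [0..<length u] ! t"
      using image[of "length P + t"] W arg_cong[OF W, of length] by (simp add: nth_append)
  qed simp
  ultimately show ?thesis unfolding lang_def by blast
qed

lemma lang_morph_shift:
  "shift_space X \<Longrightarrow> return_morphism \<sigma> w \<Longrightarrow> lang (morph_shift \<sigma> X) = morph_lang X \<sigma> w"
  using lang_morph_shift_subset morph_lang_subset_lang_morph_shift by blast

section \<open>Dendricity of the image shift\<close>

lemma morph_shift_dendric_beyond:
  fixes X :: "(int \<Rightarrow> 'a::finite) set"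
  assumes sh: "shift_space X" and rm: "return_morphism \<sigma> w" and stable: "special_stable X N"
  shows "\<forall>u\<in>lang (morph_shift \<sigma> X).
           Max (range (\<lambda>a. length (\<sigma> a))) * (N + 1) + length w - 1 \<le> length u \<longrightarrow>
           dendric (morph_shift \<sigma> X) u"
proof (intro ballI impI)
  fix u assume u: "u \<in> lang (morph_shift \<sigma> X)"
    and len: "Max (range (\<lambda>a. length (\<sigma> a))) * (N + 1) + length w - 1 \<le> length u"
  define M where "M = Max (range (\<lambda>a. length (\<sigma> a)))"
  have M: "length (\<sigma> a) \<le> M" for a unfolding M_def by (rule Max_ge) auto
  have "1 \<le> M"
    using M[of undefined] return_morphism_nonempty[OF rm, of undefined] by (cases "\<sigma> undefined") auto
  with M show "dendric (morph_shift \<sigma> X) u"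
    using rm double_star_ext_B[OF stable] lang_morph_shift[OF sh rm] u len unfolding M_def[symmetric]
    by (intro dendric_long_morph_factor[where M = M and N = N and X = X and u = u]) auto
qed

theorem mainTheorem4:
  fixes X :: "(int \<Rightarrow> 'a::finite) set"
    and \<sigma> :: "'a \<Rightarrow> 'b::finite list"
    and w :: "'b list"
  assumes "shift_space X"
    and "eventually_dendric X"
    and "return_morphism \<sigma> w"
  shows "eventually_dendric (morph_shift \<sigma> X) \<and>
    (\<forall>N::nat.
       (\<forall>v\<in>lang X. left_special X v \<and> length v \<ge> N \<longrightarrow>
          (\<exists>!a. left_special X (v @ [a])) \<and>
          (\<forall>a. left_special X (v @ [a]) \<longrightarrow> ext_L X (v @ [a]) = ext_L X v)) \<and>
       (\<forall>v\<in>lang X. right_special X v \<and> length v \<ge> N \<longrightarrow>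
          (\<exists>!a. right_special X (a # v)) \<and>
          (\<forall>a. right_special X (a # v) \<longrightarrow> ext_R X (a # v) = ext_R X v))
       \<longrightarrow> dendric_threshold (morph_shift \<sigma> X)
             \<le> Max (range (\<lambda>a. length (\<sigma> a))) * (N + 1) + length w - 1)"
proof -
  note beyond = morph_shift_dendric_beyond[OF assms(1,3)]
  have threshold: "dendric_threshold (morph_shift \<sigma> X)
      \<le> Max (range (\<lambda>a. length (\<sigma> a))) * (N + 1) + length w - 1" if "special_stable X N" for N
    unfolding dendric_threshold_def by (rule Least_le) (rule beyond[OF that])
  obtain N where "special_stable X N" using eventually_dendric_special_stable[OF assms(2)] by blast
  then have "eventually_dendric (morph_shift \<sigma> X)"
    unfolding eventually_dendric_def using beyond by blast
  then show ?thesis using threshold unfolding special_stable_def by blast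
qed

end
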